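(* Let $q\ge2$, let $U$ be a $q\times q$ row-stochastic matrix (a DMC on $[1:q]$), and let $\Sigma_{n,U}$ denote the $n$-block noisy permutation channel built from $U$ (defined in the context). Logarithms are to base $2$. (i) (Achievability.) Let $r$ be the rank of $U$. There is a constant $c$ such that there exists a sequence of $\left(n,\left(\frac{n}{c\log n}\right)^{(r-1)/2},\lambda_{1,n},\lambda_{2,n}\right)$ ID codes for $\Sigma_{n,U}$ with deterministic encoders and deterministic decoders such that $\lambda_{1,n},\lambda_{2,n}\to0$ as $n\to\infty$. (ii) (Weak converse.) Assume all entries of $U$ are strictly positive. There exists a real number $R'$ such that for every $R>R'$, every sequence $(n_i)$ with $n_i\to\infty$ and every sequence of $\left(n_i, R\,n_i^{(q-1)/2}(\log n_i)^{(q-1)(q-2)/2},\lambda_{1,i},\lambda_{2,i}\right)$ ID codes with deterministic encoders and decoders for $\Sigma_{n_i,U}$, we have $\liminf_{i\to\infty}(\lambda_{1,i}+\lambda_{2,i})>0$. (iii) (Strong converse.) Assume all entries of $U$ are strictly positive. For any sequences $(n_i)$, $(c_i)$ with $n_i\to\infty$, $c_i\to\infty$, and any sequence of $\left(n_i, c_i\,n_i^{(q-1)/2}(\log n_i)^{(q-1)(q-2)/2},\lambda_{1,i},\lambda_{2,i}\right)$ ID codes with deterministic encoders and decoders for $\Sigma_{n_i,U}$, we have $\liminf_{i\to\infty}(\lambda_{1,i}+\lambda_{2,i})\ge1$.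
   Context: Noisy permutation channel $\Sigma_{n,U}$: input $\mathbf{x}\in[1:q]^n$; a permutation $\sigma$ of $[1:n]$ is drawn uniformly at random, $z_i=x_{\sigma^{-1}(i)}$, and each $z_i$ passes independently through $U$, giving output $\mathbf{y}\in[1:q]^n$; i.e. $P_\Sigma(\mathbf{y}|\mathbf{x})=\frac1{n!}\sum_{\sigma}\prod_i U(y_i|x_{\sigma^{-1}(i)})$. ID codes: an $L$-sized ID code for a channel $P(y|x)$ from $\mathcal{A}$ to $\mathcal{B}$ with deterministic decoders is $\{(Q_i,\mathcal{D}_i)\}_{i=1}^L$ with $Q_i$ a distribution on $\mathcal{A}$ and $\mathcal{D}_i\subseteq\mathcal{B}$; it has a deterministic encoder if every $Q_i$ is a point mass (at a codeword $\mathbf{x}_i$). Error probabilities: $\lambda_{i\to j}=\sum_x Q_i(x)\sum_{y\in\mathcal{D}_j}P(y|x)$ ($i\ne j$), $\lambda_{i\not\to i}=\sum_xQ_i(x)\sum_{y\notin\mathcal{D}_i}P(y|x)$, $\lambda_1=\max_i\lambda_{i\not\to i}$, $\lambda_2=\max_{i\ne j}\lambda_{i\to j}$. An $(n,L,\lambda_1,\lambda_2)$ ID code for $\Sigma_{n,U}$ is an $L$-sized ID code for $\Sigma_{n,U}$ with these error probabilities. *)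

theory Defs
  imports "HOL-Analysis.Analysis" "HOL-Combinatorics.Permutations"
begin

text \<open>The alphabet [1:q] is modelled by a finite type 'q with q = CARD('q).
  A DMC U is a q x q real matrix with U $ x $ y = U(y|x) (rows = inputs).\<close>

definition row_stochastic :: "real^'q^'q \<Rightarrow> bool" where
  "row_stochastic U \<longleftrightarrow> (\<forall>x y. 0 \<le> U $ x $ y) \<and> (\<forall>x. (\<Sum>y\<in>UNIV. U $ x $ y) = 1)"

definition words :: "nat \<Rightarrow> 'q list set" where
  "words n = {xs. length xs = n}"

definition perm_channel :: "real^'q^'q \<Rightarrow> nat \<Rightarrow> 'q list \<Rightarrow> 'q list \<Rightarrow> real" where
  "perm_channel U n x y =
     (1 / fact n) * (\<Sum>\<sigma>\<in>{\<sigma>. \<sigma> permutes {..<n}}. \<Prod>i<n. U $ (x ! (inv \<sigma> i)) $ (y ! i))"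

definition det_ID_code :: "nat \<Rightarrow> nat \<Rightarrow> (nat \<Rightarrow> 'q list) \<Rightarrow> (nat \<Rightarrow> 'q list set) \<Rightarrow> bool" where
  "det_ID_code n L enc dec \<longleftrightarrow> (\<forall>i<L. enc i \<in> words n \<and> dec i \<subseteq> words n)"

definition err_miss :: "real^'q^'q \<Rightarrow> nat \<Rightarrow> (nat \<Rightarrow> 'q list) \<Rightarrow> (nat \<Rightarrow> 'q list set) \<Rightarrow> nat \<Rightarrow> real" where
  "err_miss U n enc dec i = (\<Sum>y\<in>words n - dec i. perm_channel U n (enc i) y)"

definition err_false :: "real^'q^'q \<Rightarrow> nat \<Rightarrow> (nat \<Rightarrow> 'q list) \<Rightarrow> (nat \<Rightarrow> 'q list set) \<Rightarrow> nat \<Rightarrow> nat \<Rightarrow> real" where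
  "err_false U n enc dec i j = (\<Sum>y\<in>dec j. perm_channel U n (enc i) y)"

text \<open>lambda_1 = max_i lambda_{i -/-> i}; lambda_2 = max_{i \<noteq> j} lambda_{i -> j}
  (a maximum over an empty index set is taken to be 0; all terms are nonnegative).\<close>
definition lambda1 :: "real^'q^'q \<Rightarrow> nat \<Rightarrow> nat \<Rightarrow> (nat \<Rightarrow> 'q list) \<Rightarrow> (nat \<Rightarrow> 'q list set) \<Rightarrow> real" where
  "lambda1 U n L enc dec = Max ({0} \<union> (\<lambda>i. err_miss U n enc dec i) ` {..<L})"

definition lambda2 :: "real^'q^'q \<Rightarrow> nat \<Rightarrow> nat \<Rightarrow> (nat \<Rightarrow> 'q list) \<Rightarrow> (nat \<Rightarrow> 'q list set) \<Rightarrow> real" where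
  "lambda2 U n L enc dec =
     Max ({0} \<union> (\<lambda>(i, j). err_false U n enc dec i j) ` {(i, j). i < L \<and> j < L \<and> i \<noteq> j})"

end

theory Submission
  imports Defs "HOL-Real_Asymp.Real_Asymp"
begin

text \<open>The output distribution of the noisy permutation channel depends on the codeword only
  through its type, and the type of the output concentrates, with fluctuations of order
  \<open>\<surd>n\<close>, around the mean type \<open>\<Sum>\<^sub>a N\<^sub>x(a) U(\<cdot>|a)\<close>.

  Achievability: pick \<open>rank U\<close> linearly independent rows of \<open>U\<close>. Codewords built from these
  symbols whose types lie on a grid of spacing \<open>s \<approx> \<surd>(n log n)\<close> have mean types that a fixed
  linear map separates by \<open>s\<close>; decoding to the ball of radius \<open>s/2\<close> around the mean type errs
  with probability \<open>O(n/s\<^sup>2) \<rightarrow> 0\<close>, and there are about \<open>(n / log n)\<^bsup>(rank U - 1)/2\<^esup>\<close> grid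
  points.

  Converse: if every entry of \<open>U\<close> is at least \<open>\<mu> > 0\<close>, each row is a mixture containing \<open>\<mu>\<close>
  times any other row, and a binomial size-biasing estimate shows that replacing one of \<open>m\<close>
  copies of a symbol changes every output probability by at most \<open>1/\<surd>(m\<mu>)\<close>. Two codewords
  whose types are at \<open>l\<^sub>1\<close>-distance \<open>D\<close> therefore have \<open>\<lambda>\<^sub>1 + \<lambda>\<^sub>2 \<ge> 1 - O(D/\<surd>n)\<close>. By
  pigeonhole on a grid of types of spacing \<open>s\<close>, more than \<open>(n/s + 1)\<^bsup>q-1\<^esup>\<close> codewords force
  two at distance \<open>O(s)\<close>; with \<open>c n\<^bsup>(q-1)/2\<^esup>\<close> codewords and \<open>s \<approx> \<surd>n / c\<^bsup>1/(q-1)\<^esup>\<close> this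
  gives \<open>\<lambda>\<^sub>1 + \<lambda>\<^sub>2 \<ge> 1 - O(c\<^bsup>-1/(q-1)\<^esup> + n\<^bsup>-1/2\<^esup>)\<close>.\<close>

section \<open>The noisy permutation channel and its error probabilities\<close>

definition prob_vector :: "('q::finite \<Rightarrow> real) \<Rightarrow> bool" where
  "prob_vector r \<longleftrightarrow> (\<forall>a. 0 \<le> r a) \<and> (\<Sum>a\<in>UNIV. r a) = 1"

lemma prob_vector_le_1:
  assumes "prob_vector r" shows "r a \<le> 1"
proof -
  have "r a \<le> (\<Sum>b\<in>UNIV. r b)"
    using assms by (intro member_le_sum) (auto simp: prob_vector_def)
  then show ?thesis using assms by (simp add: prob_vector_def)
qed

lemma prob_vector_row: "row_stochastic U \<Longrightarrow> prob_vector (vec_nth (U $ a))"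
  unfolding row_stochastic_def prob_vector_def by auto

lemma finite_words [simp]: "finite (words n :: 'q::finite list set)"
  unfolding words_def using finite_lists_length_eq[of "UNIV :: 'q set" n] by simp

lemma words_0: "words 0 = {[]}"
  unfolding words_def by auto

lemma words_Suc: "words (Suc n) = (\<lambda>(a, y). a # y) ` (UNIV \<times> words n)"
  unfolding words_def by (auto simp: length_Suc_conv image_iff)

lemma sum_words_prod_nth:
  fixes s :: "nat \<Rightarrow> 'q::finite \<Rightarrow> real"
  shows "(\<Sum>y\<in>words n. \<Prod>j<n. s j (y ! j)) = (\<Prod>j<n. \<Sum>a\<in>UNIV. s j a)"
proof (induction n arbitrary: s)
  case 0
  show ?case by (simp add: words_0)
next
  case (Suc n)
  have "(\<Sum>y\<in>words (Suc n). \<Prod>j<Suc n. s j (y ! j))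
       = (\<Sum>(a,y)\<in>UNIV \<times> words n. \<Prod>j<Suc n. s j ((a#y) ! j))"
    unfolding words_Suc
    by (subst sum.reindex) (auto simp: inj_on_def case_prod_unfold simp del: prod.lessThan_Suc)
  also have "\<dots> = (\<Sum>a\<in>UNIV. \<Sum>y\<in>words n. s 0 a * (\<Prod>j<n. s (Suc j) (y ! j)))"
    by (simp add: sum.cartesian_product prod.lessThan_Suc_shift del: prod.lessThan_Suc)
  also have "\<dots> = (\<Sum>a\<in>UNIV. s 0 a) * (\<Prod>j<n. \<Sum>a\<in>UNIV. s (Suc j) a)"
    by (simp add: Suc.IH[of "\<lambda>j. s (Suc j)"] sum_distrib_left[symmetric] sum_distrib_right)
  also have "\<dots> = (\<Prod>j<Suc n. \<Sum>a\<in>UNIV. s j a)"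
    by (simp add: prod.lessThan_Suc_shift del: prod.lessThan_Suc)
  finally show ?case .
qed

lemma bij_betw_permute_list_words:
  assumes "\<sigma> permutes {..<n}"
  shows "bij_betw (permute_list \<sigma>) (words n) (words n)"
proof (rule bij_betw_byWitness[where f' = "permute_list (inv \<sigma>)"])
  have inv: "inv \<sigma> permutes {..<n}" using permutes_inv[OF assms] .
  show "\<forall>y\<in>words n. permute_list (inv \<sigma>) (permute_list \<sigma> y) = y"
    using assms inv by (auto simp: words_def permute_list_compose[symmetric] permutes_inv_o
        permute_list_id)
  show "\<forall>y\<in>words n. permute_list \<sigma> (permute_list (inv \<sigma>) y) = y"
    using assms inv by (auto simp: words_def permute_list_compose[symmetric] permutes_inv_o
        permute_list_id)
qed (auto simp: words_def)

text \<open>The noisy permutation channel with the rows of the input symbols replaced by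
  arbitrary output distributions \<open>rs ! j\<close>; the converse needs this generality to split a row
  into a mixture of two distributions.\<close>
definition perm_output :: "('q \<Rightarrow> real) list \<Rightarrow> 'q list \<Rightarrow> real" where
  "perm_output rs y = (1 / fact (length rs)) *
     (\<Sum>\<sigma>\<in>{\<sigma>. \<sigma> permutes {..<length rs}}. \<Prod>j<length rs. (rs ! j) (y ! \<sigma> j))"

lemma perm_channel_eq_perm_output:
  assumes "length x = n"
  shows "perm_channel U n x y = perm_output (map (\<lambda>a. vec_nth (U $ a)) x) y"
proof -
  have "(\<Prod>i<n. U $ (x ! (inv \<sigma> i)) $ (y ! i)) = (\<Prod>j<n. U $ (x ! j) $ (y ! \<sigma> j))"
    if "\<sigma> permutes {..<n}" for \<sigma>
    using prod.reindex_bij_betw[OF permutes_imp_bij[OF that], of "\<lambda>i. U $ (x ! (inv \<sigma> i)) $ (y ! i)"]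
      permutes_inverses(2)[OF that] by simp
  then show ?thesis
    unfolding perm_channel_def perm_output_def using assms by (auto intro!: sum.cong)
qed

lemma perm_output_permute:
  assumes \<pi>: "\<pi> permutes {..<length rs}"
  shows "perm_output (permute_list \<pi> rs) y = perm_output rs y"
proof -
  let ?n = "length rs"
  have "(\<Prod>j<?n. (permute_list \<pi> rs ! j) (y ! \<sigma> j)) = (\<Prod>k<?n. (rs ! k) (y ! (\<sigma> \<circ> inv \<pi>) k))"
    for \<sigma>
  proof -
    have "(\<Prod>j<?n. (permute_list \<pi> rs ! j) (y ! \<sigma> j))
        = (\<Prod>j<?n. (rs ! \<pi> j) (y ! (\<sigma> \<circ> inv \<pi>) (\<pi> j)))"
      using permutes_inverses(2)[OF \<pi>] by (intro prod.cong) (auto simp: permute_list_nth \<pi>)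
    also have "\<dots> = (\<Prod>k<?n. (rs ! k) (y ! (\<sigma> \<circ> inv \<pi>) k))"
      using prod.reindex_bij_betw[OF permutes_imp_bij[OF \<pi>], of "\<lambda>k. (rs ! k) (y ! (\<sigma> \<circ> inv \<pi>) k)"]
      by simp
    finally show ?thesis .
  qed
  then have "perm_output (permute_list \<pi> rs) y = (1 / fact ?n) *
      (\<Sum>\<sigma>\<in>{\<sigma>. \<sigma> permutes {..<?n}}. \<Prod>j<?n. (rs ! j) (y ! (\<sigma> \<circ> inv \<pi>) j))"
    unfolding perm_output_def by simp
  also have "\<dots> = perm_output rs y"
    unfolding perm_output_def
    using sum_permutations_compose_right[OF permutes_inv[OF \<pi>],
        of "\<lambda>\<sigma>. \<Prod>j<?n. (rs ! j) (y ! \<sigma> j)"] by simp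
  finally show ?thesis .
qed

lemma perm_output_mset_eq:
  assumes "mset rs = mset rs'"
  shows "perm_output rs y = perm_output rs' y"
proof -
  obtain p where "p permutes {..<length rs'}" "permute_list p rs' = rs"
    using mset_eq_permutation[OF assms] by blast
  then show ?thesis using perm_output_permute by metis
qed

lemma perm_output_Cons_mixture:
  "perm_output ((\<lambda>b. \<alpha> * u b + \<beta> * v b) # rs) y
     = \<alpha> * perm_output (u # rs) y + \<beta> * perm_output (v # rs) y"
  unfolding perm_output_def
  by (simp add: prod.lessThan_Suc_shift sum_distrib_left sum.distrib algebra_simps
      del: fact_Suc prod.lessThan_Suc)

lemma sum_words_perm_output_symmetric:
  fixes g :: "'q::finite list \<Rightarrow> real"
  assumes g: "\<And>y \<sigma>. y \<in> words n \<Longrightarrow> \<sigma> permutes {..<n} \<Longrightarrow> g (permute_list \<sigma> y) = g y"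
    and len: "length rs = n"
  shows "(\<Sum>y\<in>words n. g y * perm_output rs y) = (\<Sum>y\<in>words n. g y * (\<Prod>j<n. (rs ! j) (y ! j)))"
proof -
  let ?P = "{\<sigma>. \<sigma> permutes {..<n}}"
  let ?f = "\<lambda>z. g z * (\<Prod>j<n. (rs ! j) (z ! j))"
  have inner: "(\<Sum>y\<in>words n. g y * (\<Prod>j<n. (rs ! j) (y ! \<sigma> j))) = (\<Sum>y\<in>words n. ?f y)"
    if \<sigma>: "\<sigma> permutes {..<n}" for \<sigma>
  proof -
    have "(\<Sum>y\<in>words n. g y * (\<Prod>j<n. (rs ! j) (y ! \<sigma> j))) = (\<Sum>y\<in>words n. ?f (permute_list \<sigma> y))"
    proof (rule sum.cong[OF refl])
      fix y :: "'q list" assume y: "y \<in> words n"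
      then have "(\<Prod>j<n. (rs ! j) (y ! \<sigma> j)) = (\<Prod>j<n. (rs ! j) (permute_list \<sigma> y ! j))"
        by (intro prod.cong) (auto simp: permute_list_nth words_def \<sigma>)
      then show "g y * (\<Prod>j<n. (rs ! j) (y ! \<sigma> j)) = ?f (permute_list \<sigma> y)"
        using g[OF y \<sigma>] by simp
    qed
    also have "\<dots> = (\<Sum>y\<in>words n. ?f y)"
      using sum.reindex_bij_betw[OF bij_betw_permute_list_words[OF \<sigma>], of ?f] by simp
    finally show ?thesis .
  qed
  have "(\<Sum>y\<in>words n. g y * perm_output rs y)
      = (1 / fact n) * (\<Sum>\<sigma>\<in>?P. \<Sum>y\<in>words n. g y * (\<Prod>j<n. (rs ! j) (y ! \<sigma> j)))"
    unfolding perm_output_def len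
    by (subst sum.swap) (simp add: sum_distrib_left sum_distrib_right algebra_simps)
  also have "\<dots> = (\<Sum>y\<in>words n. ?f y)"
    using inner by (simp add: card_permutations)
  finally show ?thesis .
qed

lemma perm_output_nonneg:
  assumes "\<forall>r\<in>set rs. prob_vector r"
  shows "0 \<le> perm_output rs y"
  unfolding perm_output_def using assms
  by (intro mult_nonneg_nonneg sum_nonneg prod_nonneg) (auto simp: prob_vector_def)

lemma sum_words_perm_output:
  fixes rs :: "('q::finite \<Rightarrow> real) list"
  assumes "\<forall>r\<in>set rs. prob_vector r" "length rs = n"
  shows "(\<Sum>y\<in>words n. perm_output rs y) = 1"
proof -
  have "(\<Sum>y\<in>words n. perm_output rs y) = (\<Sum>y\<in>words n. 1 * (\<Prod>j<n. (rs ! j) (y ! j)))"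
    using sum_words_perm_output_symmetric[of n "\<lambda>_. 1" rs] assms(2) by simp
  also have "\<dots> = (\<Prod>j<n. \<Sum>a\<in>UNIV. (rs ! j) a)" using sum_words_prod_nth by simp
  also have "\<dots> = 1" using assms by (intro prod.neutral) (auto simp: prob_vector_def)
  finally show ?thesis .
qed

lemma sum_perm_output_bounds:
  fixes rs :: "('q::finite \<Rightarrow> real) list"
  assumes "\<forall>r\<in>set rs. prob_vector r" "length rs = n" "A \<subseteq> words n"
  shows "0 \<le> (\<Sum>y\<in>A. perm_output rs y)" "(\<Sum>y\<in>A. perm_output rs y) \<le> 1"
proof -
  show "0 \<le> (\<Sum>y\<in>A. perm_output rs y)" using assms by (intro sum_nonneg perm_output_nonneg) auto
  have "(\<Sum>y\<in>A. perm_output rs y) \<le> (\<Sum>y\<in>words n. perm_output rs y)"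
    using assms by (intro sum_mono2) (auto intro: perm_output_nonneg)
  then show "(\<Sum>y\<in>A. perm_output rs y) \<le> 1" using sum_words_perm_output[OF assms(1,2)] by simp
qed

lemma perm_channel_nonneg:
  assumes "row_stochastic U" "length x = n"
  shows "0 \<le> perm_channel U n x y"
  unfolding perm_channel_eq_perm_output[OF assms(2)]
  using prob_vector_row[OF assms(1)] by (intro perm_output_nonneg) auto

lemma sum_words_perm_channel:
  fixes U :: "real^'q::finite^'q"
  assumes "row_stochastic U" "length x = n"
  shows "(\<Sum>y\<in>words n. perm_channel U n x y) = 1"
  unfolding perm_channel_eq_perm_output[OF assms(2)]
  using prob_vector_row[OF assms(1)] assms(2) by (intro sum_words_perm_output) auto

lemma finite_off_diagonal: "finite {(i, j). i < L \<and> j < L \<and> i \<noteq> (j::nat)}"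
  by (rule finite_subset[of _ "{..<L} \<times> {..<L}"]) auto

lemma err_miss_le_lambda1: "i < L \<Longrightarrow> err_miss U n enc dec i \<le> lambda1 U n L enc dec"
  unfolding lambda1_def by (intro Max_ge) auto

lemma err_false_le_lambda2:
  assumes "i < L" "j < L" "i \<noteq> j"
  shows "err_false U n enc dec i j \<le> lambda2 U n L enc dec"
  unfolding lambda2_def using assms finite_off_diagonal[of L] by (intro Max_ge) auto

lemma lambda1_le:
  "0 \<le> \<beta> \<Longrightarrow> (\<And>i. i < L \<Longrightarrow> err_miss U n enc dec i \<le> \<beta>) \<Longrightarrow> lambda1 U n L enc dec \<le> \<beta>"
  unfolding lambda1_def by (subst Max_le_iff) auto

lemma lambda2_le:
  "0 \<le> \<beta> \<Longrightarrow> (\<And>i j. i < L \<Longrightarrow> j < L \<Longrightarrow> i \<noteq> j \<Longrightarrow> err_false U n enc dec i j \<le> \<beta>) \<Longrightarrow>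
    lambda2 U n L enc dec \<le> \<beta>"
  unfolding lambda2_def using finite_off_diagonal[of L] by (subst Max_le_iff) auto

lemma lambda_nonneg: "0 \<le> lambda1 U n L enc dec" "0 \<le> lambda2 U n L enc dec"
  unfolding lambda1_def lambda2_def using finite_off_diagonal[of L] by (auto intro: Max_ge)

section \<open>Binomial averages\<close>

definition binom_expect :: "real \<Rightarrow> nat \<Rightarrow> (nat \<Rightarrow> real) \<Rightarrow> real" where
  "binom_expect p m f = (\<Sum>j\<le>m. real (m choose j) * p ^ j * (1 - p) ^ (m - j) * f j)"

lemma binom_expect_0 [simp]: "binom_expect p 0 f = f 0"
  unfolding binom_expect_def by simp

lemma binom_expect_Suc:
  "binom_expect p (Suc m) f = (1 - p) * binom_expect p m f + p * binom_expect p m (\<lambda>j. f (Suc j))"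
proof -
  define g where "g j = real (m choose j) * p ^ j * (1 - p) ^ (Suc m - j) * f j" for j
  have "(1 - p) * binom_expect p m f = (\<Sum>j\<le>Suc m. g j)"
  proof -
    have "(\<Sum>j\<le>Suc m. g j) = (\<Sum>j\<le>m. g j)" by (simp add: g_def)
    also have "\<dots> = (1 - p) * binom_expect p m f"
      unfolding binom_expect_def g_def sum_distrib_left by (rule sum.cong) (auto simp: Suc_diff_le)
    finally show ?thesis by simp
  qed
  moreover have "(\<Sum>j\<le>Suc m. g j) = g 0 + (\<Sum>j\<le>m. g (Suc j))" by (rule sum.atMost_Suc_shift)
  moreover have "binom_expect p (Suc m) f = (1 - p) ^ Suc m * f 0 +
      (\<Sum>j\<le>m. real (Suc m choose Suc j) * p ^ Suc j * (1 - p) ^ (m - j) * f (Suc j))"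
    unfolding binom_expect_def by (subst sum.atMost_Suc_shift) simp
  moreover have "(\<Sum>j\<le>m. real (Suc m choose Suc j) * p ^ Suc j * (1 - p) ^ (m - j) * f (Suc j))
      = (\<Sum>j\<le>m. g (Suc j)) + p * binom_expect p m (\<lambda>j. f (Suc j))"
    unfolding binom_expect_def g_def sum_distrib_left sum.distrib[symmetric]
    by (rule sum.cong) (auto simp: algebra_simps)
  ultimately show ?thesis by (simp add: g_def)
qed

lemma binom_expect_cong:
  "(\<And>j. j \<le> m \<Longrightarrow> f j = g j) \<Longrightarrow> binom_expect p m f = binom_expect p m g"
  unfolding binom_expect_def by (rule sum.cong) auto

lemma binom_expect_linear:
  "binom_expect p m (\<lambda>j. a * f j + b * g j) = a * binom_expect p m f + b * binom_expect p m g"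
  unfolding binom_expect_def by (simp add: sum.distrib sum_distrib_left algebra_simps)

lemma binom_expect_sum:
  "finite A \<Longrightarrow> (\<Sum>y\<in>A. binom_expect p m (\<lambda>j. F j y)) = binom_expect p m (\<lambda>j. \<Sum>y\<in>A. F j y)"
  unfolding binom_expect_def by (subst sum.swap) (simp add: sum_distrib_left)

lemma binom_expect_mono:
  "0 \<le> p \<Longrightarrow> p \<le> 1 \<Longrightarrow> (\<And>j. j \<le> m \<Longrightarrow> f j \<le> g j) \<Longrightarrow> binom_expect p m f \<le> binom_expect p m g"
  unfolding binom_expect_def by (intro sum_mono mult_left_mono) auto

lemma binom_expect_abs:
  "0 \<le> p \<Longrightarrow> p \<le> 1 \<Longrightarrow> \<bar>binom_expect p m f\<bar> \<le> binom_expect p m (\<lambda>j. \<bar>f j\<bar>)"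
  unfolding binom_expect_def by (rule order_trans[OF sum_abs]) (simp add: abs_mult)

lemma binom_expect_const: "binom_expect p m (\<lambda>_. c) = c"
  by (induction m) (simp_all add: binom_expect_Suc algebra_simps)

lemma binom_expect_square:
  "binom_expect p m (\<lambda>j. (real j + c)\<^sup>2) = (real m * p + c)\<^sup>2 + real m * p * (1 - p)"
proof (induction m arbitrary: c)
  case (Suc m)
  have shift: "(\<lambda>j. (real (Suc j) + c)\<^sup>2) = (\<lambda>j. (real j + (c + 1))\<^sup>2)"
    by (simp add: algebra_simps)
  show ?case unfolding binom_expect_Suc shift Suc.IH by (simp add: algebra_simps power2_eq_square)
qed simp

lemma binom_expect_abs_deviation:
  assumes "0 < p" "p < 1" "m \<ge> 1"
  shows "binom_expect p m (\<lambda>j. \<bar>real j - real m * p\<bar>) \<le> sqrt (real m * p * (1 - p))"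
proof -
  define t where "t = sqrt (real m * p * (1 - p))"
  have t: "t > 0" "t * t = real m * p * (1 - p)" using assms by (simp_all add: t_def)
  \<comment> \<open>AM-GM: \<open>\<bar>x\<bar> \<le> (x\<^sup>2 / t + t) / 2\<close>\<close>
  have amgm: "\<bar>x\<bar> \<le> (1 / (2 * t)) * (x + 0)\<^sup>2 + (t / 2) * 1" for x :: real
  proof -
    have "0 \<le> (\<bar>x\<bar> - t)\<^sup>2" by simp
    then show ?thesis using t(1) by (simp add: field_simps power2_eq_square)
  qed
  have "binom_expect p m (\<lambda>j. \<bar>real j - real m * p\<bar>)
      \<le> binom_expect p m (\<lambda>j. (1 / (2 * t)) * (real j + (- real m * p))\<^sup>2 + (t / 2) * 1)"
    using assms amgm by (intro binom_expect_mono) auto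
  also have "\<dots> = t"
    unfolding binom_expect_linear binom_expect_square binom_expect_const
    using t by (simp add: field_simps)
  finally show ?thesis by (simp add: t_def)
qed

text \<open>Size-biasing: \<open>j\<close> times the \<open>Bin(m, p)\<close> weight of \<open>j\<close> is \<open>m p\<close> times the
  \<open>Bin(m - 1, p)\<close> weight of \<open>j - 1\<close>.\<close>
lemma binom_expect_shift:
  assumes "0 < p"
  shows "binom_expect p k (\<lambda>j. h (Suc j))
       = binom_expect p (Suc k) (\<lambda>j. (real j / (real (Suc k) * p)) * h j)"
proof -
  have "binom_expect p (Suc k) (\<lambda>j. (real j / (real (Suc k) * p)) * h j)
      = (\<Sum>j\<le>k. real (Suc k choose Suc j) * p ^ Suc j * (1 - p) ^ (k - j) *
           ((real (Suc j) / (real (Suc k) * p)) * h (Suc j)))"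
    unfolding binom_expect_def by (subst sum.atMost_Suc_shift) simp
  also have "\<dots> = (\<Sum>j\<le>k. real (k choose j) * p ^ j * (1 - p) ^ (k - j) * h (Suc j))"
  proof (rule sum.cong[OF refl])
    fix j
    have "real (Suc k choose Suc j) * real (Suc j) = real (Suc k) * real (k choose j)"
      using Suc_times_binomial_eq[of k j] by (metis of_nat_mult mult.commute)
    then have "real (Suc k choose Suc j) = real (Suc k) * real (k choose j) / real (Suc j)"
      by (simp add: field_simps del: binomial_Suc_Suc of_nat_Suc)
    then show "real (Suc k choose Suc j) * p ^ Suc j * (1 - p) ^ (k - j) *
           ((real (Suc j) / (real (Suc k) * p)) * h (Suc j))
        = real (k choose j) * p ^ j * (1 - p) ^ (k - j) * h (Suc j)"
      using assms by (simp add: field_simps del: binomial_Suc_Suc of_nat_Suc)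
  qed
  finally show ?thesis unfolding binom_expect_def by simp
qed

lemma binom_expect_shift_bound:
  assumes p: "0 < p" "p < 1" and m: "m \<ge> 1"
    and h: "\<And>j. j \<le> m \<Longrightarrow> 0 \<le> h j \<and> h j \<le> 1"
  shows "\<bar>binom_expect p m h - binom_expect p (m - 1) (\<lambda>j. h (Suc j))\<bar> \<le> 1 / sqrt (real m * p)"
proof -
  have mp: "real m * p > 0" using p m by simp
  have "binom_expect p m h - binom_expect p (m - 1) (\<lambda>j. h (Suc j))
      = binom_expect p m (\<lambda>j. 1 * h j + (-1) * ((real j / (real m * p)) * h j))"
    unfolding binom_expect_linear using binom_expect_shift[OF p(1), of "m - 1" h] m by simp
  also have "\<bar>\<dots>\<bar> \<le> binom_expect p m (\<lambda>j. \<bar>1 * h j + (-1) * ((real j / (real m * p)) * h j)\<bar>)"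
    using p by (intro binom_expect_abs) auto
  also have "\<dots> \<le> binom_expect p m (\<lambda>j. (1 / (real m * p)) * \<bar>real j - real m * p\<bar> + 0 * 0)"
  proof (intro binom_expect_mono)
    fix j assume j: "j \<le> m"
    have "1 * h j + (-1) * ((real j / (real m * p)) * h j) = (1 - real j / (real m * p)) * h j"
      by (simp add: left_diff_distrib)
    also have "1 - real j / (real m * p) = (real m * p - real j) / (real m * p)"
      using mp p m by (simp add: diff_divide_distrib)
    finally have eq: "1 * h j + (-1) * ((real j / (real m * p)) * h j)
        = ((real m * p - real j) / (real m * p)) * h j" .
    have "\<bar>1 * h j + (-1) * ((real j / (real m * p)) * h j)\<bar>
        \<le> \<bar>(real m * p - real j) / (real m * p)\<bar>"
      unfolding eq abs_mult using h[OF j] by (intro mult_left_le) auto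
    then show "\<bar>1 * h j + (-1) * ((real j / (real m * p)) * h j)\<bar>
        \<le> (1 / (real m * p)) * \<bar>real j - real m * p\<bar> + 0 * 0"
      using mp by (simp add: abs_minus_commute)
  qed (use p in auto)
  also have "\<dots> = (1 / (real m * p)) * binom_expect p m (\<lambda>j. \<bar>real j - real m * p\<bar>)"
    unfolding binom_expect_linear by simp
  also have "\<dots> \<le> (1 / (real m * p)) * sqrt (real m * p * (1 - p))"
    using binom_expect_abs_deviation[OF p m] mp by (intro mult_left_mono) auto
  also have "\<dots> \<le> (1 / (real m * p)) * sqrt (real m * p)"
    using p mp by (intro mult_left_mono real_sqrt_le_mono) (auto simp: mult_left_le)
  also have "\<dots> = 1 / sqrt (real m * p)"
    using sqrt_divide_self_eq[of "real m * p"] mp by (simp add: divide_inverse mult.commute)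
  finally show ?thesis .
qed

lemma perm_output_replicate_mixture:
  assumes w: "\<And>b. w b = p * u b + (1 - p) * v b"
  shows "perm_output (replicate l w @ rs) y
       = binom_expect p l (\<lambda>j. perm_output (replicate j u @ replicate (l - j) v @ rs) y)"
proof (induction l arbitrary: rs)
  case (Suc l)
  have w_eq: "w = (\<lambda>b. p * u b + (1 - p) * v b)" using w by auto
  have mix: "perm_output (replicate j u @ replicate (l - j) v @ w # rs) y
       = p * perm_output (replicate (Suc j) u @ replicate (l - j) v @ rs) y
         + (1 - p) * perm_output (replicate j u @ replicate (Suc l - j) v @ rs) y"
    if j: "j \<le> l" for j
  proof -
    have "perm_output (replicate j u @ replicate (l - j) v @ w # rs) y
        = perm_output (w # replicate j u @ replicate (l - j) v @ rs) y"
      by (rule perm_output_mset_eq) simp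
    also have "\<dots> = p * perm_output (u # replicate j u @ replicate (l - j) v @ rs) y
                   + (1 - p) * perm_output (v # replicate j u @ replicate (l - j) v @ rs) y"
      unfolding w_eq by (rule perm_output_Cons_mixture)
    also have "perm_output (v # replicate j u @ replicate (l - j) v @ rs) y
        = perm_output (replicate j u @ replicate (Suc l - j) v @ rs) y"
      by (rule perm_output_mset_eq) (simp add: Suc_diff_le j)
    finally show ?thesis by simp
  qed
  have "perm_output (replicate (Suc l) w @ rs) y = perm_output (replicate l w @ (w # rs)) y"
    by (rule perm_output_mset_eq) simp
  also have "\<dots> = binom_expect p l (\<lambda>j. perm_output (replicate j u @ replicate (l - j) v @ w # rs) y)"
    by (rule Suc.IH)
  also have "\<dots> = binom_expect p l (\<lambda>j. p * perm_output (replicate (Suc j) u @ replicate (l - j) v @ rs) y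
         + (1 - p) * perm_output (replicate j u @ replicate (Suc l - j) v @ rs) y)"
    by (rule binom_expect_cong) (rule mix)
  also have "\<dots> = binom_expect p (Suc l) (\<lambda>j. perm_output (replicate j u @ replicate (Suc l - j) v @ rs) y)"
    unfolding binom_expect_linear binom_expect_Suc by simp
  finally show ?case .
qed simp

text \<open>Write \<open>w = p u + (1 - p) v\<close>. Both output probabilities become binomial averages of the
  same bounded sequence, one of them shifted by one.\<close>
lemma sum_perm_output_replace_one:
  fixes u w :: "'q::finite \<Rightarrow> real"
  assumes u: "prob_vector u" and w: "prob_vector w" and rs: "\<forall>r\<in>set rs. prob_vector r"
    and p: "0 < p" "p < 1" and dom: "\<And>b. p * u b \<le> w b" and m: "m \<ge> 1"
    and A: "A \<subseteq> words (m + length rs)"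
  shows "\<bar>(\<Sum>y\<in>A. perm_output (replicate m w @ rs) y)
          - (\<Sum>y\<in>A. perm_output (u # replicate (m - 1) w @ rs) y)\<bar> \<le> 1 / sqrt (real m * p)"
proof -
  define v where "v b = (w b - p * u b) / (1 - p)" for b
  have w_eq: "w b = p * u b + (1 - p) * v b" for b using p by (simp add: v_def)
  have v: "prob_vector v"
  proof -
    have "(\<Sum>b\<in>UNIV. v b) = ((\<Sum>b\<in>UNIV. w b) - p * (\<Sum>b\<in>UNIV. u b)) / (1 - p)"
      unfolding v_def sum_divide_distrib[symmetric] sum_subtractf sum_distrib_left by simp
    also have "\<dots> = 1" using u w p by (simp add: prob_vector_def)
    finally show ?thesis using dom p by (auto simp: prob_vector_def v_def)
  qed
  have finA: "finite A" using A finite_subset finite_words by blast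
  define h where "h j = (\<Sum>y\<in>A. perm_output (replicate j u @ replicate (m - j) v @ rs) y)" for j
  have h: "0 \<le> h j \<and> h j \<le> 1" if "j \<le> m" for j
  proof -
    have "\<forall>r\<in>set (replicate j u @ replicate (m - j) v @ rs). prob_vector r" using u v rs by auto
    moreover have "length (replicate j u @ replicate (m - j) v @ rs) = m + length rs" using that by simp
    ultimately show ?thesis unfolding h_def using sum_perm_output_bounds A by blast
  qed
  have "(\<Sum>y\<in>A. perm_output (replicate m w @ rs) y) = binom_expect p m h"
    unfolding perm_output_replicate_mixture[OF w_eq] h_def by (rule binom_expect_sum[OF finA])
  moreover have "(\<Sum>y\<in>A. perm_output (u # replicate (m - 1) w @ rs) y)
      = binom_expect p (m - 1) (\<lambda>j. h (Suc j))"
  proof -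
    have "(\<Sum>y\<in>A. perm_output (u # replicate (m - 1) w @ rs) y)
        = (\<Sum>y\<in>A. perm_output (replicate (m - 1) w @ (u # rs)) y)"
      by (intro sum.cong refl perm_output_mset_eq) simp
    also have "\<dots> = binom_expect p (m - 1)
        (\<lambda>j. \<Sum>y\<in>A. perm_output (replicate j u @ replicate (m - 1 - j) v @ u # rs) y)"
      unfolding perm_output_replicate_mixture[OF w_eq] by (rule binom_expect_sum[OF finA])
    also have "\<dots> = binom_expect p (m - 1) (\<lambda>j. h (Suc j))"
      unfolding h_def
      by (intro binom_expect_cong sum.cong refl perm_output_mset_eq) (simp add: Suc_diff_Suc)
    finally show ?thesis .
  qed
  ultimately show ?thesis using binom_expect_shift_bound[OF p m h] by simp
qed

section \<open>Converse\<close>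

definition out_prob :: "real^'q^'q \<Rightarrow> 'q list \<Rightarrow> 'q list set \<Rightarrow> real" where
  "out_prob U x A = (\<Sum>y\<in>A. perm_channel U (length x) x y)"

lemma out_prob_eq_perm_output: "out_prob U x A = (\<Sum>y\<in>A. perm_output (map (\<lambda>a. vec_nth (U $ a)) x) y)"
  unfolding out_prob_def by (intro sum.cong refl perm_channel_eq_perm_output)

lemma out_prob_mset_eq: "mset x = mset x' \<Longrightarrow> out_prob U x A = out_prob U x' A"
  unfolding out_prob_eq_perm_output by (intro sum.cong refl perm_output_mset_eq) simp

definition min_entry :: "real^'q::finite^'q \<Rightarrow> real" where
  "min_entry U = Min (range (\<lambda>(a, b). U $ a $ b))"

lemma min_entry_le: "min_entry U \<le> U $ a $ b"
  unfolding min_entry_def by (rule Min_le) auto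

lemma min_entry_pos: "(\<forall>x y. U $ x $ y > 0) \<Longrightarrow> min_entry U > 0"
  unfolding min_entry_def by (subst Min_gr_iff) auto

lemma min_entry_less_1:
  fixes U :: "real^'q::finite^'q"
  assumes st: "row_stochastic U" and q2: "CARD('q) \<ge> 2"
  shows "min_entry U < 1"
proof -
  obtain a b :: 'q where ab: "a \<noteq> b"
    using q2 by (metis card_2_iff' card_le_Suc_iff numeral_2_eq_2 ex_in_conv UNIV_I)
  have "U $ a $ a + U $ a $ b = (\<Sum>y\<in>{a, b}. U $ a $ y)" using ab by simp
  also have "\<dots> \<le> (\<Sum>y\<in>UNIV. U $ a $ y)"
    using st by (intro sum_mono2) (auto simp: row_stochastic_def)
  finally have "U $ a $ a + U $ a $ b \<le> 1" using st by (simp add: row_stochastic_def)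
  moreover have "min_entry U \<le> U $ a $ a" "min_entry U \<le> U $ a $ b" by (rule min_entry_le)+
  moreover have "0 \<le> U $ a $ a" "0 \<le> U $ a $ b" using st by (auto simp: row_stochastic_def)
  ultimately show ?thesis by linarith
qed

text \<open>Every row dominates \<open>min_entry U\<close> times every other row, so
  \<open>sum_perm_output_replace_one\<close> applies to the copies of the row of \<open>b\<close>.\<close>
lemma out_prob_replace_symbol:
  fixes U :: "real^'q::finite^'q"
  assumes st: "row_stochastic U" and pos: "\<forall>x y. U $ x $ y > 0" and q2: "CARD('q) \<ge> 2"
    and A: "A \<subseteq> words (Suc (length w))"
  shows "\<bar>out_prob U (b # w) A - out_prob U (a # w) A\<bar>
      \<le> 1 / sqrt (real (count (mset (b # w)) b) * min_entry U)"
proof -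
  define m where "m = count (mset (b # w)) b"
  define z where "z = filter (\<lambda>c. c \<noteq> b) w"
  let ?row = "\<lambda>a. vec_nth (U $ a)"
  have m: "m \<ge> 1" by (simp add: m_def)
  have ms_b: "mset (b # w) = mset (replicate m b @ z)"
    by (rule multiset_eqI) (auto simp: m_def z_def mset_filter)
  have ms_a: "mset (a # w) = mset (a # replicate (m - 1) b @ z)"
    by (rule multiset_eqI) (auto simp: m_def z_def mset_filter)
  have len: "m + length z = Suc (length w)"
    using arg_cong[OF ms_b, of size] by simp
  have p: "0 < min_entry U" "min_entry U < 1"
    using min_entry_pos[OF pos] min_entry_less_1[OF st q2] by auto
  have dom: "min_entry U * U $ a $ c \<le> U $ b $ c" for c
  proof -
    have "min_entry U * U $ a $ c \<le> min_entry U * 1"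
      using p prob_vector_le_1[OF prob_vector_row[OF st]] by (intro mult_left_mono) auto
    also have "\<dots> \<le> U $ b $ c" using min_entry_le by simp
    finally show ?thesis .
  qed
  have "out_prob U (b # w) A = (\<Sum>y\<in>A. perm_output (replicate m (?row b) @ map ?row z) y)"
    using out_prob_mset_eq[OF ms_b] unfolding out_prob_eq_perm_output by simp
  moreover have "out_prob U (a # w) A
      = (\<Sum>y\<in>A. perm_output (?row a # replicate (m - 1) (?row b) @ map ?row z) y)"
    using out_prob_mset_eq[OF ms_a] unfolding out_prob_eq_perm_output by simp
  moreover have "\<bar>(\<Sum>y\<in>A. perm_output (replicate m (?row b) @ map ?row z) y)
      - (\<Sum>y\<in>A. perm_output (?row a # replicate (m - 1) (?row b) @ map ?row z) y)\<bar>
      \<le> 1 / sqrt (real m * min_entry U)"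
    using prob_vector_row[OF st] A len
    by (intro sum_perm_output_replace_one[OF _ _ _ p dom m]) auto
  ultimately show ?thesis by (simp add: m_def)
qed

lemma sum_count_mset: "(\<Sum>e\<in>UNIV. count (mset (x :: 'q::finite list)) e) = length x"
proof (induction x)
  case (Cons a x)
  have "(\<Sum>e\<in>UNIV. count (mset (a # x)) e)
      = (\<Sum>e\<in>UNIV. count (mset x) e + (if e = a then 1 else 0))"
    by (intro sum.cong) auto
  also have "\<dots> = (\<Sum>e\<in>UNIV. count (mset x) e) + 1"
    by (simp add: sum.distrib)
  finally show ?case using Cons by simp
qed simp

text \<open>The \<open>l\<^sub>1\<close> distance of the types of two words, kept in \<^typ>\<open>nat\<close> (via truncated
  subtraction) so that it can serve as an induction measure.\<close>
definition type_dist :: "'q::finite list \<Rightarrow> 'q list \<Rightarrow> nat" where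
  "type_dist x x' = (\<Sum>e\<in>UNIV. (count (mset x) e - count (mset x') e) + (count (mset x') e - count (mset x) e))"

lemma type_dist_int:
  "int (type_dist x x') = (\<Sum>e\<in>UNIV. \<bar>int (count (mset x) e) - int (count (mset x') e)\<bar>)"
  unfolding type_dist_def of_nat_sum by (intro sum.cong refl) auto

lemma exists_count_greater:
  fixes x x' :: "'q::finite list"
  assumes "length x = length x'" "mset x \<noteq> mset x'"
  shows "\<exists>a. count (mset x) a > count (mset x') a"
proof (rule ccontr)
  assume "\<not> ?thesis"
  then have le: "\<And>a. count (mset x) a \<le> count (mset x') a" by (auto simp: not_less)
  have "(\<Sum>e\<in>UNIV. count (mset x) e) = (\<Sum>e\<in>UNIV. count (mset x') e)"
    using sum_count_mset[of x] sum_count_mset[of x'] assms(1) by simp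
  then have "count (mset x) a = count (mset x') a" for a
    using le by (rule sum_mono_inv) simp_all
  then have "mset x = mset x'" by (rule multiset_eqI)
  then show False using assms(2) by simp
qed

lemma type_dist_replace:
  fixes x x' :: "'q::finite list"
  assumes a: "count (mset x) a > count (mset x') a" and c: "count (mset x) c < count (mset x') c"
    and ax: "a \<in> set x"
  shows "type_dist x x' = type_dist (c # remove1 a x) x' + 2"
proof -
  have ac: "a \<noteq> c" using a c by auto
  define T where "T y e = (count (mset y) e - count (mset x') e) + (count (mset x') e - count (mset y) e)"
    for y e
  have "T x e = T (c # remove1 a x) e + (if e = a then 1 else 0) + (if e = c then 1 else 0)" for e
    using a c ac ax unfolding T_def by (auto simp: count_mset_gt_0)
  then have "(\<Sum>e\<in>UNIV. T x e) = (\<Sum>e\<in>UNIV. T (c # remove1 a x) e)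
      + (\<Sum>e\<in>UNIV. (if e = a then 1 else 0)) + (\<Sum>e\<in>UNIV. (if e = c then 1 else 0))"
    by (simp add: sum.distrib)
  then show ?thesis unfolding type_dist_def T_def by simp
qed

text \<open>Both words are one replacement away from \<open>b # remove1 a x\<close>, which has at least as many
  copies of \<open>b\<close> as \<open>x\<close>.\<close>
lemma out_prob_swap_symbol:
  fixes U :: "real^'q::finite^'q"
  assumes st: "row_stochastic U" and pos: "\<forall>x y. U $ x $ y > 0" and q2: "CARD('q) \<ge> 2"
    and A: "A \<subseteq> words (length x)" and a: "a \<in> set x"
    and M: "0 < M" "M \<le> real (count (mset x) b)"
  shows "\<bar>out_prob U x A - out_prob U (c # remove1 a x) A\<bar> \<le> 2 / sqrt (M * min_entry U)"
proof -
  define w where "w = remove1 a x"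
  have x: "mset x = mset (a # w)" using a by (simp add: w_def)
  then have "A \<subseteq> words (Suc (length w))" using A by (metis length_Cons size_mset)
  moreover have "M \<le> real (count (mset (b # w)) b)"
    using M(2) x by (cases "a = b") auto
  moreover have "1 / sqrt (real (count (mset (b # w)) b) * min_entry U) \<le> 1 / sqrt (M * min_entry U)"
    if "M \<le> real (count (mset (b # w)) b)"
    using M(1) that min_entry_pos[OF pos]
    by (intro divide_left_mono real_sqrt_le_mono mult_right_mono mult_pos_pos) auto
  ultimately have replace: "\<bar>out_prob U (b # w) A - out_prob U (e # w) A\<bar> \<le> 1 / sqrt (M * min_entry U)"
    for e using out_prob_replace_symbol[OF st pos q2, of A w b e] by linarith
  have "\<bar>out_prob U x A - out_prob U (c # w) A\<bar>
      \<le> 1 / sqrt (M * min_entry U) + 1 / sqrt (M * min_entry U)"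
    using replace[of a] replace[of c] out_prob_mset_eq[OF x, of U A] by linarith
  then show ?thesis by (simp add: w_def)
qed

text \<open>Walk from \<open>x\<close> to \<open>x'\<close> one replacement at a time: each replacement lowers \<open>type_dist\<close>
  by 2 and keeps at least \<open>M\<close> copies of \<open>b\<close>.\<close>
lemma out_prob_type_dist_bound:
  fixes U :: "real^'q::finite^'q"
  assumes st: "row_stochastic U" and pos: "\<forall>x y. U $ x $ y > 0" and q2: "CARD('q) \<ge> 2"
    and A: "A \<subseteq> words n" and M: "M > 0"
  shows "length x = n \<Longrightarrow> length x' = n \<Longrightarrow> M \<le> real (count (mset x) b) \<Longrightarrow>
    M \<le> real (count (mset x') b) \<Longrightarrow>
    \<bar>out_prob U x A - out_prob U x' A\<bar> \<le> real (type_dist x x') / sqrt (M * min_entry U)"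
proof (induction "type_dist x x'" arbitrary: x rule: less_induct)
  case less
  show ?case
  proof (cases "mset x = mset x'")
    case True
    then show ?thesis using out_prob_mset_eq[OF True] M min_entry_pos[OF pos] by simp
  next
    case False
    obtain a where a: "count (mset x) a > count (mset x') a"
      using exists_count_greater[OF _ False] less.prems by auto
    obtain c where c: "count (mset x) c < count (mset x') c"
      using exists_count_greater[of x' x] False less.prems by auto
    have ax: "a \<in> set x" using a by (metis count_mset_0_iff not_less0)
    define y where "y = c # remove1 a x"
    have d: "type_dist x x' = type_dist y x' + 2"
      unfolding y_def by (rule type_dist_replace[OF a c ax])
    have "length y = n"
      using less.prems(1) ax length_pos_if_in_set[OF ax] by (simp add: y_def length_remove1)
    moreover have "M \<le> real (count (mset y) b)"
      using a less.prems(3,4) ax by (cases "a = b") (auto simp: y_def)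
    ultimately have "\<bar>out_prob U y A - out_prob U x' A\<bar> \<le> real (type_dist y x') / sqrt (M * min_entry U)"
      using less.hyps d less.prems by simp
    moreover have "\<bar>out_prob U x A - out_prob U y A\<bar> \<le> 2 / sqrt (M * min_entry U)"
      unfolding y_def using A less.prems ax M by (intro out_prob_swap_symbol[OF st pos q2]) auto
    ultimately show ?thesis using d by (simp add: add_divide_distrib)
  qed
qed

lemma lambda_sum_ge_out_prob_gap:
  fixes U :: "real^'q::finite^'q"
  assumes code: "det_ID_code n L enc dec" and ij: "i < L" "j < L" "i \<noteq> j"
    and st: "row_stochastic U"
  shows "1 - \<bar>out_prob U (enc i) (dec i) - out_prob U (enc j) (dec i)\<bar>
      \<le> lambda1 U n L enc dec + lambda2 U n L enc dec"
proof -
  have li: "length (enc i) = n" and lj: "length (enc j) = n" and di: "dec i \<subseteq> words n"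
    using code ij unfolding det_ID_code_def words_def by auto
  have "err_miss U n enc dec i = 1 - out_prob U (enc i) (dec i)"
  proof -
    have "(\<Sum>y\<in>words n. perm_channel U n (enc i) y)
        = (\<Sum>y\<in>words n - dec i. perm_channel U n (enc i) y) + (\<Sum>y\<in>dec i. perm_channel U n (enc i) y)"
      using di by (metis Diff_partition finite_words sum.subset_diff)
    then show ?thesis using sum_words_perm_channel[OF st li]
      unfolding err_miss_def out_prob_def li by simp
  qed
  moreover have "err_false U n enc dec j i = out_prob U (enc j) (dec i)"
    unfolding err_false_def out_prob_def lj by simp
  ultimately show ?thesis
    using err_miss_le_lambda1[OF ij(1), of U n enc dec] err_false_le_lambda2[of j L i U n enc dec] ij
    by linarith
qed

lemma abs_diff_less_of_div_eq:
  assumes "(m::nat) div s = k div s" "s > 0"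
  shows "\<bar>int m - int k\<bar> < int s"
proof -
  have "m = s * (k div s) + m mod s" using assms(1) mult_div_mod_eq[of s m] by simp
  moreover have "k = s * (k div s) + k mod s" by simp
  moreover have "m mod s < s" "k mod s < s" using assms by simp_all
  ultimately show ?thesis by linarith
qed

text \<open>The count of \<open>a\<^sub>0\<close> is determined by the others, the two words having the same
  length.\<close>
lemma type_dist_le_if_counts_close:
  fixes x x' :: "'q::finite list"
  assumes len: "length x = length x'"
    and close: "\<And>e. e \<noteq> a0 \<Longrightarrow> \<bar>int (count (mset x) e) - int (count (mset x') e)\<bar> \<le> int s"
  shows "type_dist x x' \<le> 2 * (CARD('q) - 1) * s"
proof -
  define D where "D e = int (count (mset x) e) - int (count (mset x') e)" for e
  have "(\<Sum>e\<in>UNIV. D e) = 0"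
    using len sum_count_mset[of x] sum_count_mset[of x']
    unfolding D_def sum_subtractf of_nat_sum[symmetric] by simp
  moreover have split: "(\<Sum>e\<in>UNIV. f e) = f a0 + (\<Sum>e\<in>UNIV - {a0}. f e)" for f :: "'q \<Rightarrow> int"
    by (rule sum.remove) auto
  ultimately have "\<bar>D a0\<bar> \<le> (\<Sum>e\<in>UNIV - {a0}. \<bar>D e\<bar>)"
    using sum_abs[of D "UNIV - {a0}"] by (simp add: eq_neg_iff_add_eq_0[symmetric])
  then have "(\<Sum>e\<in>UNIV. \<bar>D e\<bar>) \<le> 2 * (\<Sum>e\<in>UNIV - {a0}. \<bar>D e\<bar>)"
    using split[of "\<lambda>e. \<bar>D e\<bar>"] by simp
  also have "\<dots> \<le> 2 * (\<Sum>e\<in>UNIV - {a0}. int s)"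
    using close by (intro mult_left_mono sum_mono) (auto simp: D_def)
  also have "\<dots> = int (2 * (CARD('q) - 1) * s)"
    using finite_UNIV_card_ge_0[where 'a='q] by (simp add: card_Diff_singleton of_nat_diff)
  finally show ?thesis unfolding type_dist_int[symmetric] D_def by linarith
qed

text \<open>Pigeonhole on the grid of types with spacing \<open>s\<close>, boxing the counts of all symbols but
  one.\<close>
lemma exists_codewords_close_types:
  fixes enc :: "nat \<Rightarrow> 'q::finite list"
  assumes len: "\<forall>i<L. length (enc i) = n" and s: "s > 0"
    and L: "L > (n div s + 1) ^ (CARD('q) - 1)"
  shows "\<exists>i j. i < L \<and> j < L \<and> i \<noteq> j \<and> type_dist (enc i) (enc j) \<le> 2 * (CARD('q) - 1) * s"
proof -
  obtain a0 :: 'q where True by simp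
  define box where "box x = (\<lambda>a. if a = a0 then 0 else count (mset x) a div s)" for x
  define B where "B = {f. f a0 = 0 \<and> (\<forall>a. f a \<le> n div s)}"
  have in_B: "box (enc i) \<in> B" if "i < L" for i
  proof -
    have "count (mset (enc i)) a \<le> n" for a
      using len that sum_count_mset[of "enc i"] member_le_sum[of a UNIV "count (mset (enc i))"] by simp
    then have "count (mset (enc i)) a div s \<le> n div s" for a by (intro div_le_mono)
    then show ?thesis unfolding B_def box_def by auto
  qed
  have card_B: "card B \<le> (n div s + 1) ^ (CARD('q) - 1)"
  proof -
    have "card B \<le> card (PiE (UNIV - {a0}) (\<lambda>_. {..n div s}))"
    proof (rule card_inj_on_le)
      show "inj_on (\<lambda>f. restrict f (UNIV - {a0})) B"
        unfolding B_def inj_on_def by (auto simp: restrict_def fun_eq_iff) metis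
      show "(\<lambda>f. restrict f (UNIV - {a0})) ` B \<subseteq> PiE (UNIV - {a0}) (\<lambda>_. {..n div s})"
        unfolding B_def by (auto simp: restrict_def PiE_def Pi_def extensional_def)
    qed (simp add: finite_PiE)
    also have "\<dots> = (n div s + 1) ^ (CARD('q) - 1)"
      by (simp add: card_PiE card_Diff_singleton)
    finally show ?thesis .
  qed
  have "finite B"
  proof (rule finite_subset)
    show "B \<subseteq> {f. \<forall>a. f a \<in> {..n div s}}" unfolding B_def by auto
    show "finite {f :: 'q \<Rightarrow> nat. \<forall>a. f a \<in> {..n div s}}"
      using finite_PiE[of "UNIV :: 'q set" "\<lambda>_. {..n div s}"] by (simp add: PiE_UNIV_domain Pi_def)
  qed
  then have "\<not> inj_on (\<lambda>i. box (enc i)) {..<L}"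
    using card_inj_on_le[of "\<lambda>i. box (enc i)" "{..<L}" B] in_B card_B L by auto
  then obtain i j where ij: "i < L" "j < L" "i \<noteq> j" "box (enc i) = box (enc j)"
    unfolding inj_on_def by auto
  have "\<bar>int (count (mset (enc i)) e) - int (count (mset (enc j)) e)\<bar> \<le> int s" if "e \<noteq> a0" for e
    using fun_cong[OF ij(4), of e] that abs_diff_less_of_div_eq[OF _ s] unfolding box_def by fastforce
  then show ?thesis using ij len by (metis type_dist_le_if_counts_close)
qed

lemma exists_frequent_symbol: "\<exists>b. real (length x) / real CARD('q) \<le> real (count (mset (x :: 'q::finite list)) b)"
proof (rule ccontr)
  assume "\<not> ?thesis"
  then have "(\<Sum>b\<in>UNIV. real (count (mset x) b)) < (\<Sum>b\<in>(UNIV::'q set). real (length x) / real CARD('q))"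
    by (intro sum_strict_mono) (auto simp: not_le)
  also have "\<dots> = real (length x)" by simp
  finally show False
    using sum_count_mset[of x] by (simp only: of_nat_sum[symmetric])
qed

text \<open>Two codewords with close types share a frequent symbol, so their output
  probabilities on the same decoding set are close.\<close>
lemma lambda_sum_ge_grid_spacing:
  fixes U :: "real^'q::finite^'q"
  assumes st: "row_stochastic U" and pos: "\<forall>x y. U $ x $ y > 0" and q2: "CARD('q) \<ge> 2"
    and code: "det_ID_code n L enc dec" and s: "s \<ge> 1"
    and L: "L > (n div s + 1) ^ (CARD('q) - 1)"
    and M: "real n / real CARD('q) - 2 * (real CARD('q) - 1) * real s > 0"
  shows "1 - 2 * (real CARD('q) - 1) * real s /
         sqrt ((real n / real CARD('q) - 2 * (real CARD('q) - 1) * real s) * min_entry U)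
      \<le> lambda1 U n L enc dec + lambda2 U n L enc dec"
proof -
  define M where "M = real n / real CARD('q) - 2 * (real CARD('q) - 1) * real s"
  have len: "\<forall>i<L. length (enc i) = n" using code by (auto simp: det_ID_code_def words_def)
  obtain i j where ij: "i < L" "j < L" "i \<noteq> j"
    and close: "type_dist (enc i) (enc j) \<le> 2 * (CARD('q) - 1) * s"
    using exists_codewords_close_types[OF len _ L] s by auto
  have "real (type_dist (enc i) (enc j)) \<le> real (2 * (CARD('q) - 1) * s)"
    using close by (simp only: of_nat_le_iff)
  then have d: "real (type_dist (enc i) (enc j)) \<le> 2 * (real CARD('q) - 1) * real s"
    using q2 by (simp add: of_nat_diff)
  obtain b where b: "real n / real CARD('q) \<le> real (count (mset (enc i)) b)"
    using exists_frequent_symbol[of "enc i"] len ij(1) by metis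
  have "\<bar>int (count (mset (enc i)) b) - int (count (mset (enc j)) b)\<bar> \<le> int (type_dist (enc i) (enc j))"
    unfolding type_dist_int
    by (rule member_le_sum[where f = "\<lambda>e. \<bar>int (count (mset (enc i)) e) - int (count (mset (enc j)) e)\<bar>"])
      auto
  then have bj: "M \<le> real (count (mset (enc j)) b)" using b d unfolding M_def by linarith
  have "0 \<le> 2 * (real CARD('q) - 1) * real s" using q2 by simp
  then have bi: "M \<le> real (count (mset (enc i)) b)" using b unfolding M_def by linarith
  have "\<bar>out_prob U (enc i) (dec i) - out_prob U (enc j) (dec i)\<bar>
      \<le> real (type_dist (enc i) (enc j)) / sqrt (M * min_entry U)"
    using code ij M len bi bj
    by (intro out_prob_type_dist_bound[OF st pos q2]) (auto simp: M_def det_ID_code_def)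
  also have "\<dots> \<le> 2 * (real CARD('q) - 1) * real s / sqrt (M * min_entry U)"
    using d M min_entry_pos[OF pos] unfolding M_def by (intro divide_right_mono) auto
  finally show ?thesis using lambda_sum_ge_out_prob_gap[OF code ij st] unfolding M_def by linarith
qed

lemma exists_grid_spacing:
  fixes c :: real and d :: nat
  assumes d: "d \<ge> 1" and c: "c \<ge> 1" and n: "real n \<ge> 5"
    and L: "c * real n powr (real d / 2) \<le> real L"
  obtains s where "s \<ge> 1" "(n div s + 1) ^ d < L" "real s \<le> 2 * sqrt (real n) / c powr (1 / real d) + 1"
proof -
  define c' where "c' = c powr (1 / real d)"
  have c': "c' \<ge> 1" unfolding c'_def using c d by (simp add: ge_one_powr_ge_zero)
  define T where "T = real L powr (1 / real d)"
  have T: "c' * sqrt (real n) \<le> T"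
  proof -
    have "(c * real n powr (real d / 2)) powr (1 / real d) \<le> T"
      unfolding T_def using L c d by (intro powr_mono2) auto
    moreover have "(c * real n powr (real d / 2)) powr (1 / real d) = c' * sqrt (real n)"
      unfolding c'_def using c d by (simp add: powr_mult powr_powr powr_half_sqrt[symmetric])
    ultimately show ?thesis by simp
  qed
  have "2 < sqrt (real n)" using n by (simp add: real_less_rsqrt)
  also have "sqrt (real n) \<le> c' * sqrt (real n)" using c' mult_right_mono[of 1 c' "sqrt (real n)"] by simp
  finally have T2: "T > 2" using T by linarith
  then have "L > 0" unfolding T_def by (cases "L = 0") auto
  then have TL: "T ^ d = real L"
    unfolding T_def using d by (simp add: powr_realpow[symmetric] powr_powr)
  define s where "s = nat \<lceil>2 * real n / T\<rceil>"
  have pos: "2 * real n / T > 0" using n T2 by simp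
  then have s: "s \<ge> 1" unfolding s_def by linarith
  show thesis
  proof
    show "1 \<le> s" by (rule s)
    have "real (n div s) \<le> real n / real s" by (rule of_nat_div_le_of_nat)
    also have "\<dots> \<le> T / 2"
    proof -
      have "2 * real n / T \<le> real s" unfolding s_def by linarith
      then show ?thesis using pos T2 s by (simp add: field_simps)
    qed
    finally have "real (n div s + 1) < T" using T2 by simp
    then have "real (n div s + 1) ^ d < T ^ d" using d by (intro power_strict_mono) auto
    then show "(n div s + 1) ^ d < L" unfolding TL by (metis of_nat_less_iff of_nat_power)
    have "real s \<le> 2 * real n / T + 1" unfolding s_def using pos by linarith
    also have "2 * real n / T \<le> 2 * real n / (c' * sqrt (real n))"
      using T c' n T2 by (intro divide_left_mono) auto
    also have "\<dots> = 2 * sqrt (real n) / c'"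
      using c' n by (simp add: field_simps real_div_sqrt)
    finally show "real s \<le> 2 * sqrt (real n) / c powr (1 / real d) + 1" by (simp add: c'_def)
  qed
qed

lemma grid_spacing_gap_estimate:
  fixes Q d \<mu> c' s n :: real
  assumes Q: "Q \<ge> 2" and d: "d = Q - 1" and \<mu>: "\<mu> > 0" and c': "c' \<ge> 1"
    and n: "12 * Q * d \<le> sqrt n" and s: "s \<le> 2 * sqrt n / c' + 1"
  shows "n / (2 * Q) \<le> n / Q - 2 * d * s"
    and "2 * d * s / sqrt ((n / Q - 2 * d * s) * \<mu>) \<le> 4 * d * sqrt (2 * Q / \<mu>) * (1 / c' + 1 / sqrt n)"
proof -
  have d1: "d \<ge> 1" using Q d by simp
  have "1 \<le> 12 * Q * d" using mult_ge1_I[of "12 * Q" d] Q d1 by simp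
  then have sn: "sqrt n \<ge> 1" using n by linarith
  have "2 * sqrt n / c' \<le> 2 * sqrt n" using c' sn by (simp add: field_simps)
  then have "s \<le> sqrt n * 3" using s sn by linarith
  also have "\<dots> \<le> sqrt n * (sqrt n / (4 * Q * d))"
    using n Q d1 sn by (intro mult_left_mono) (auto simp: field_simps)
  also have "\<dots> = n / (4 * Q * d)" using sn by simp
  finally have "2 * d * s \<le> n / (2 * Q)" using Q d1 by (simp add: field_simps)
  then show M: "n / (2 * Q) \<le> n / Q - 2 * d * s" using Q by (simp add: field_simps)
  have "2 * d * s / sqrt ((n / Q - 2 * d * s) * \<mu>)
      \<le> 2 * d * (2 * sqrt n / c' + 1) / sqrt ((n / (2 * Q)) * \<mu>)"
    using s M \<mu> d1 sn Q c' by (intro frac_le mult_left_mono real_sqrt_le_mono mult_right_mono) auto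
  also have "\<dots> = 2 * d * sqrt (2 * Q / \<mu>) * (2 / c' + 1 / sqrt n)"
  proof -
    have "sqrt ((n / (2 * Q)) * \<mu>) = sqrt n / sqrt (2 * Q / \<mu>)"
      using \<mu> Q by (simp add: real_sqrt_divide real_sqrt_mult field_simps)
    then show ?thesis using \<mu> Q sn c' by (simp add: field_simps)
  qed
  also have "\<dots> \<le> 4 * d * sqrt (2 * Q / \<mu>) * (1 / c' + 1 / sqrt n)"
    using d1 \<mu> Q sn c' by (simp add: mult.assoc divide_right_mono)
  finally show "2 * d * s / sqrt ((n / Q - 2 * d * s) * \<mu>) \<le> 4 * d * sqrt (2 * Q / \<mu>) * (1 / c' + 1 / sqrt n)" .
qed

lemma lambda_sum_lower_bound:
  fixes U :: "real^'q::finite^'q"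
  assumes st: "row_stochastic U" and pos: "\<forall>x y. U $ x $ y > 0" and q2: "CARD('q) \<ge> 2"
  obtains K N0 where "K > 0"
    "\<And>n L enc dec c. N0 \<le> n \<Longrightarrow> 1 \<le> c \<Longrightarrow> det_ID_code n L enc dec \<Longrightarrow>
       c * real n powr ((real CARD('q) - 1) / 2) \<le> real L \<Longrightarrow>
       1 - K * (1 / c powr (1 / (real CARD('q) - 1)) + 1 / sqrt (real n))
         \<le> lambda1 U n L enc dec + lambda2 U n L enc dec"
proof -
  define Q where "Q = real CARD('q)"
  define d where "d = Q - 1"
  define \<mu> where "\<mu> = min_entry U"
  have Q: "Q \<ge> 2" using q2 unfolding Q_def by simp
  have d: "d \<ge> 1" "real (CARD('q) - 1) = d" using q2 unfolding d_def Q_def by (simp_all add: of_nat_diff)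
  have \<mu>: "\<mu> > 0" unfolding \<mu>_def by (rule min_entry_pos[OF pos])
  show thesis
  proof
    show "4 * d * sqrt (2 * Q / \<mu>) > 0" using d Q \<mu> by simp
    fix n L and enc :: "nat \<Rightarrow> 'q list" and dec and c :: real
    assume n: "nat \<lceil>(12 * Q * d)\<^sup>2\<rceil> \<le> n" and c: "1 \<le> c" and code: "det_ID_code n L enc dec"
      and L: "c * real n powr ((real CARD('q) - 1) / 2) \<le> real L"
    define c' where "c' = c powr (1 / d)"
    have c': "c' \<ge> 1" unfolding c'_def using c d by (simp add: ge_one_powr_ge_zero)
    have "(12 * Q * d)\<^sup>2 \<le> real n" using n by linarith
    then have nW: "12 * Q * d \<le> sqrt (real n)" by (rule real_le_rsqrt)
    have "24 \<le> 12 * Q * d" using mult_mono[of 2 Q 1 d] Q d by simp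
    then have "24\<^sup>2 \<le> (12 * Q * d)\<^sup>2" by (intro power_mono) auto
    then have n5: "5 \<le> real n" using \<open>(12 * Q * d)\<^sup>2 \<le> real n\<close> by simp
    have "1 \<le> CARD('q) - 1" using q2 by simp
    moreover have "c * real n powr (real (CARD('q) - 1) / 2) \<le> real L"
      using L d(2) by (simp add: Q_def d_def)
    ultimately obtain s where s: "s \<ge> 1" "(n div s + 1) ^ (CARD('q) - 1) < L"
      and s_le: "real s \<le> 2 * sqrt (real n) / c' + 1"
      using exists_grid_spacing[of "CARD('q) - 1" c n L] c n5 unfolding c'_def d(2) by blast
    note gap = grid_spacing_gap_estimate[OF Q d_def \<mu> c' nW s_le]
    have "0 < real n / (2 * Q)" using n5 Q by simp
    then have "1 - 2 * d * real s / sqrt ((real n / Q - 2 * d * real s) * \<mu>)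
        \<le> lambda1 U n L enc dec + lambda2 U n L enc dec"
      using lambda_sum_ge_grid_spacing[OF st pos q2 code s] gap(1) unfolding Q_def d_def \<mu>_def by simp
    then show "1 - 4 * d * sqrt (2 * Q / \<mu>) * (1 / c powr (1 / (real CARD('q) - 1)) + 1 / sqrt (real n))
         \<le> lambda1 U n L enc dec + lambda2 U n L enc dec"
      using gap(2) unfolding c'_def d_def Q_def by linarith
  qed
qed

lemma inverse_sqrt_tendsto_0:
  assumes "filterlim ns at_top sequentially"
  shows "(\<lambda>i. 1 / sqrt (real (ns i :: nat))) \<longlonglongrightarrow> 0"
proof -
  have "((\<lambda>x::real. 1 / sqrt x) \<longlongrightarrow> 0) at_top" by real_asymp
  from filterlim_compose[OF this filterlim_compose[OF filterlim_real_sequentially assms]]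
  show ?thesis by simp
qed

lemma one_le_liminf_if_eventually_ge:
  fixes f e :: "nat \<Rightarrow> real"
  assumes ev: "\<forall>\<^sub>F i in sequentially. 1 - e i \<le> f i" and e: "e \<longlonglongrightarrow> 0"
  shows "1 \<le> liminf (\<lambda>i. ereal (f i))"
proof -
  have "(\<lambda>i. ereal (1 - e i)) \<longlonglongrightarrow> ereal (1 - 0)"
    by (intro tendsto_intros e)
  then have "liminf (\<lambda>i. ereal (1 - e i)) = 1" by (simp add: lim_imp_Liminf one_ereal_def)
  moreover have "liminf (\<lambda>i. ereal (1 - e i)) \<le> liminf (\<lambda>i. ereal (f i))"
    by (rule Liminf_mono) (use ev in \<open>auto elim: eventually_mono\<close>)
  ultimately show ?thesis by simp
qed

lemma eventually_drop_log_factor: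
  assumes ns: "filterlim ns at_top sequentially" and c: "\<forall>\<^sub>F i in sequentially. 0 \<le> c i"
    and L: "\<forall>i. P i \<and> c i * real (ns i) powr e * log 2 (real (ns i)) ^ k \<le> real (L i)"
  shows "\<forall>\<^sub>F i in sequentially. P i \<and> c i * real (ns i) powr e \<le> real (L i)"
proof -
  have "\<forall>\<^sub>F i in sequentially. 2 \<le> ns i" using ns by (simp add: filterlim_at_top)
  then show ?thesis
    using c
  proof eventually_elim
    case (elim i)
    then have "1 \<le> log 2 (real (ns i))" by simp
    then have "c i * real (ns i) powr e * 1 \<le> c i * real (ns i) powr e * log 2 (real (ns i)) ^ k"
      using elim by (intro mult_left_mono one_le_power) auto
    then show ?case using L by (metis mult.right_neutral order_trans)
  qed
qed

lemma strong_converse: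
  fixes U :: "real^'q::finite^'q" and enc :: "nat \<Rightarrow> nat \<Rightarrow> 'q list"
  assumes st: "row_stochastic U" and pos: "\<forall>x y. U $ x $ y > 0" and q2: "CARD('q) \<ge> 2"
    and ns: "filterlim ns at_top sequentially" and cs: "filterlim cs at_top sequentially"
    and codes: "\<forall>i. det_ID_code (ns i) (L i) (enc i) (dec i) \<and>
              real (L i) \<ge> cs i * real (ns i) powr ((real CARD('q) - 1) / 2)
                            * (log 2 (real (ns i))) ^ ((CARD('q) - 1) * (CARD('q) - 2) div 2)"
  shows "liminf (\<lambda>i. ereal (lambda1 U (ns i) (L i) (enc i) (dec i)
                            + lambda2 U (ns i) (L i) (enc i) (dec i))) \<ge> 1"
proof -
  obtain K N0 where "K > 0" and bound: "\<And>n L enc dec c. N0 \<le> n \<Longrightarrow> 1 \<le> c \<Longrightarrow>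
       det_ID_code n L enc dec \<Longrightarrow> c * real n powr ((real CARD('q) - 1) / 2) \<le> real L \<Longrightarrow>
       1 - K * (1 / c powr (1 / (real CARD('q) - 1)) + 1 / sqrt (real n))
         \<le> lambda1 U n L enc dec + lambda2 U n L enc dec"
    by (rule lambda_sum_lower_bound[OF st pos q2]) blast
  define e where "e i = K * (1 / cs i powr (1 / (real CARD('q) - 1)) + 1 / sqrt (real (ns i)))" for i
  have "(\<lambda>i. cs i powr (- (1 / (real CARD('q) - 1)))) \<longlonglongrightarrow> 0"
    using cs q2 by (intro tendsto_neg_powr) auto
  then have "e \<longlonglongrightarrow> K * (0 + 0)"
    unfolding e_def powr_minus_divide[symmetric] by (intro tendsto_intros inverse_sqrt_tendsto_0[OF ns])
  moreover have cs1: "\<forall>\<^sub>F i in sequentially. 1 \<le> cs i" using cs by (simp add: filterlim_at_top)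
  then have "\<forall>\<^sub>F i in sequentially. 0 \<le> cs i" by eventually_elim simp
  note codes' = eventually_drop_log_factor[OF ns this codes]
  have "\<forall>\<^sub>F i in sequentially. N0 \<le> ns i" using ns by (simp add: filterlim_at_top)
  then have "\<forall>\<^sub>F i in sequentially. 1 - e i
      \<le> lambda1 U (ns i) (L i) (enc i) (dec i) + lambda2 U (ns i) (L i) (enc i) (dec i)"
    using cs1 codes'
  proof eventually_elim
    case (elim i)
    then show ?case unfolding e_def by (intro bound) auto
  qed
  ultimately show ?thesis by (intro one_le_liminf_if_eventually_ge) simp_all
qed

lemma weak_converse:
  fixes U :: "real^'q::finite^'q"
  assumes st: "row_stochastic U" and pos: "\<forall>x y. U $ x $ y > 0" and q2: "CARD('q) \<ge> 2"
  shows "\<exists>R'::real. \<forall>R > R'. \<forall>(ns :: nat \<Rightarrow> nat) (L :: nat \<Rightarrow> nat) (enc :: nat \<Rightarrow> nat \<Rightarrow> 'q list) dec.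
         filterlim ns at_top sequentially \<longrightarrow>
         (\<forall>i. det_ID_code (ns i) (L i) (enc i) (dec i) \<and>
              real (L i) \<ge> R * real (ns i) powr ((real CARD('q) - 1) / 2)
                            * (log 2 (real (ns i))) ^ ((CARD('q) - 1) * (CARD('q) - 2) div 2)) \<longrightarrow>
         liminf (\<lambda>i. ereal (lambda1 U (ns i) (L i) (enc i) (dec i)
                            + lambda2 U (ns i) (L i) (enc i) (dec i))) > 0"
proof -
  obtain K N0 where K: "K > 0" and bound: "\<And>n L enc dec c. N0 \<le> n \<Longrightarrow> 1 \<le> c \<Longrightarrow>
       det_ID_code n L enc dec \<Longrightarrow> c * real n powr ((real CARD('q) - 1) / 2) \<le> real L \<Longrightarrow>
       1 - K * (1 / c powr (1 / (real CARD('q) - 1)) + 1 / sqrt (real n))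
         \<le> lambda1 U n L enc dec + lambda2 U n L enc dec"
    by (rule lambda_sum_lower_bound[OF st pos q2]) blast
  define d where "d = real CARD('q) - 1"
  have d: "d \<ge> 1" using q2 unfolding d_def by simp
  \<comment> \<open>beyond \<open>R'\<close> the first term of the bound is at most \<open>1/2\<close>\<close>
  show ?thesis
  proof (intro exI[of _ "max 1 ((2 * K) powr d)"] allI impI)
    fix R ns L dec and enc :: "nat \<Rightarrow> nat \<Rightarrow> 'q list"
    assume R: "max 1 ((2 * K) powr d) < R" and ns: "filterlim ns at_top sequentially"
      and codes: "\<forall>i. det_ID_code (ns i) (L i) (enc i) (dec i) \<and>
              real (L i) \<ge> R * real (ns i) powr ((real CARD('q) - 1) / 2)
                            * (log 2 (real (ns i))) ^ ((CARD('q) - 1) * (CARD('q) - 2) div 2)"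
    have "2 * K = ((2 * K) powr d) powr (1 / d)" using K d by (simp add: powr_powr)
    also have "\<dots> \<le> R powr (1 / d)" using R d by (intro powr_mono2) auto
    finally have half: "K * (1 / R powr (1 / d)) \<le> 1 / 2"
      using R K by (simp add: field_simps)
    have "(\<lambda>i. K * (1 / sqrt (real (ns i)))) \<longlonglongrightarrow> K * 0"
      by (intro tendsto_intros inverse_sqrt_tendsto_0[OF ns])
    then have "\<forall>\<^sub>F i in sequentially. K * (1 / sqrt (real (ns i))) < 1 / 4"
      by (intro order_tendstoD(2)) auto
    moreover have "\<forall>\<^sub>F i in sequentially. N0 \<le> ns i" using ns by (simp add: filterlim_at_top)
    moreover have "\<forall>\<^sub>F i in sequentially. det_ID_code (ns i) (L i) (enc i) (dec i) \<and>
       R * real (ns i) powr ((real CARD('q) - 1) / 2) \<le> real (L i)"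
      using R by (intro eventually_drop_log_factor[OF ns _ codes]) simp
    ultimately have ev: "\<forall>\<^sub>F i in sequentially. ereal (1 / 4)
        \<le> ereal (lambda1 U (ns i) (L i) (enc i) (dec i) + lambda2 U (ns i) (L i) (enc i) (dec i))"
    proof eventually_elim
      case (elim i)
      then have "1 - K * (1 / R powr (1 / d) + 1 / sqrt (real (ns i)))
          \<le> lambda1 U (ns i) (L i) (enc i) (dec i) + lambda2 U (ns i) (L i) (enc i) (dec i)"
        using R unfolding d_def by (intro bound) auto
      then show ?case using half elim by (simp add: distrib_left)
    qed
    have "ereal (1 / 4) = liminf (\<lambda>i. ereal (1 / 4))" by (simp add: Liminf_const)
    also have "\<dots> \<le> liminf (\<lambda>i. ereal (lambda1 U (ns i) (L i) (enc i) (dec i)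
        + lambda2 U (ns i) (L i) (enc i) (dec i)))"
      by (rule Liminf_mono[OF ev])
    finally show "liminf (\<lambda>i. ereal (lambda1 U (ns i) (L i) (enc i) (dec i)
        + lambda2 U (ns i) (L i) (enc i) (dec i))) > 0"
      by (rule less_le_trans[rotated]) simp
  qed
qed

section \<open>Achievability\<close>

definition type_vec :: "'q::finite list \<Rightarrow> real^'q" where
  "type_vec y = (\<chi> b. real (count (mset y) b))"

definition mean_type :: "real^'q::finite^'q \<Rightarrow> 'q list \<Rightarrow> real^'q" where
  "mean_type U x = (\<Sum>a\<in>UNIV. real (count (mset x) a) *\<^sub>R U $ a)"

definition prod_expect :: "('q \<Rightarrow> real) list \<Rightarrow> ('q list \<Rightarrow> real) \<Rightarrow> real" where
  "prod_expect rs f = (\<Sum>y\<in>words (length rs). (\<Prod>j<length rs. (rs ! j) (y ! j)) * f y)"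

lemma prod_expect_Nil: "prod_expect [] f = f []"
  unfolding prod_expect_def by (simp add: words_0)

lemma prod_expect_Cons:
  fixes r :: "'q::finite \<Rightarrow> real"
  shows "prod_expect (r # rs) f = (\<Sum>a\<in>UNIV. r a * prod_expect rs (\<lambda>y. f (a # y)))"
proof -
  let ?n = "length rs"
  have "prod_expect (r # rs) f
      = (\<Sum>(a,y)\<in>UNIV \<times> words ?n. (\<Prod>j<Suc ?n. ((r # rs) ! j) ((a#y) ! j)) * f (a # y))"
    unfolding prod_expect_def
    by (simp add: words_Suc sum.reindex inj_on_def case_prod_unfold del: prod.lessThan_Suc)
  also have "\<dots> = (\<Sum>a\<in>UNIV. \<Sum>y\<in>words ?n. r a * ((\<Prod>j<?n. (rs ! j) (y ! j)) * f (a # y)))"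
    by (simp add: sum.cartesian_product prod.lessThan_Suc_shift mult.assoc del: prod.lessThan_Suc)
  also have "\<dots> = (\<Sum>a\<in>UNIV. r a * prod_expect rs (\<lambda>y. f (a # y)))"
    unfolding prod_expect_def by (simp add: sum_distrib_left)
  finally show ?thesis .
qed

lemma prod_expect_linear:
  "prod_expect rs (\<lambda>y. \<alpha> * f y + \<beta> * g y) = \<alpha> * prod_expect rs f + \<beta> * prod_expect rs g"
  unfolding prod_expect_def by (simp add: sum.distrib sum_distrib_left algebra_simps)

lemma prod_expect_const:
  assumes "\<forall>r\<in>set rs. prob_vector (r :: 'q::finite \<Rightarrow> real)"
  shows "prod_expect rs (\<lambda>_. c) = c"
  using assms
  by (induction rs) (auto simp: prod_expect_Nil prod_expect_Cons prob_vector_def sum_distrib_right[symmetric])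

lemma prod_expect_count_centered:
  assumes "\<forall>r\<in>set rs. prob_vector (r :: 'q::finite \<Rightarrow> real)"
  shows "prod_expect rs (\<lambda>y. real (count (mset y) b) - sum_list (map (\<lambda>r. r b) rs)) = 0"
  using assms
proof (induction rs)
  case (Cons r rs)
  have r: "prob_vector r" and rs: "\<forall>r\<in>set rs. prob_vector r" using Cons.prems by auto
  have "prod_expect rs (\<lambda>y. real (count (mset (a # y)) b) - sum_list (map (\<lambda>r. r b) (r # rs)))
      = prod_expect rs (\<lambda>y. 1 * (real (count (mset y) b) - sum_list (map (\<lambda>r. r b) rs))
          + ((if b = a then 1 else 0) - r b) * 1)" for a
    by (simp add: algebra_simps)
  also have "\<dots> a = (if b = a then 1 else 0) - r b" for a
    unfolding prod_expect_linear Cons.IH[OF rs] prod_expect_const[OF rs] by simp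
  finally have step: "\<And>a. prod_expect rs (\<lambda>y. real (count (mset (a # y)) b)
      - sum_list (map (\<lambda>r. r b) (r # rs))) = (if b = a then 1 else 0) - r b" .
  have "r a * ((if b = a then 1 else 0) - r b) = (if a = b then r a else 0) - r a * r b" for a
    by (auto simp: algebra_simps)
  then have "(\<Sum>a\<in>UNIV. r a * ((if b = a then 1 else 0) - r b)) = r b - (\<Sum>a\<in>UNIV. r a) * r b"
    by (simp add: sum_subtractf sum_distrib_right)
  then show ?case unfolding prod_expect_Cons step using r by (simp add: prob_vector_def)
qed (simp add: prod_expect_Nil)

lemma prod_expect_count_variance:
  assumes "\<forall>r\<in>set rs. prob_vector (r :: 'q::finite \<Rightarrow> real)"
  shows "prod_expect rs (\<lambda>y. (real (count (mset y) b) - sum_list (map (\<lambda>r. r b) rs))\<^sup>2) \<le> real (length rs)"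
  using assms
proof (induction rs)
  case (Cons r rs)
  let ?m = "sum_list (map (\<lambda>r. r b) rs)"
  let ?V = "prod_expect rs (\<lambda>y. (real (count (mset y) b) - ?m)\<^sup>2)"
  have r: "prob_vector r" and rs: "\<forall>r\<in>set rs. prob_vector r" using Cons.prems by auto
  define \<delta> where "\<delta> a = (if b = a then 1 else 0) - r b" for a
  have "prod_expect rs (\<lambda>y. (real (count (mset (a # y)) b) - sum_list (map (\<lambda>r. r b) (r # rs)))\<^sup>2)
      = prod_expect rs (\<lambda>y. 1 * (1 * (real (count (mset y) b) - ?m)\<^sup>2
          + (2 * \<delta> a) * (real (count (mset y) b) - ?m)) + (\<delta> a)\<^sup>2 * 1)" for a
    by (simp add: \<delta>_def power2_eq_square algebra_simps)
  also have "\<dots> a = ?V + (\<delta> a)\<^sup>2" for a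
    unfolding prod_expect_linear prod_expect_const[OF rs] prod_expect_count_centered[OF rs] by simp
  finally have step: "\<And>a. prod_expect rs (\<lambda>y. (real (count (mset (a # y)) b)
      - sum_list (map (\<lambda>r. r b) (r # rs)))\<^sup>2) = ?V + (\<delta> a)\<^sup>2" .
  have "(\<delta> a)\<^sup>2 \<le> 1" for a
    using r prob_vector_le_1[OF r, of b] unfolding \<delta>_def prob_vector_def
    by (auto simp: power2_eq_square abs_square_le_1 intro: mult_le_one)
  then have "(\<Sum>a\<in>UNIV. r a * (?V + (\<delta> a)\<^sup>2)) \<le> (\<Sum>a\<in>UNIV. r a * (?V + 1))"
    using r by (intro sum_mono mult_left_mono) (auto simp: prob_vector_def)
  also have "\<dots> = ?V + 1" using r by (simp add: prob_vector_def sum_distrib_right[symmetric])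
  also have "\<dots> \<le> real (length rs) + 1" using Cons.IH[OF rs] by simp
  finally show ?case unfolding prod_expect_Cons step by simp
qed (simp add: prod_expect_Nil)

lemma sum_list_map_eq_sum_count_mset:
  fixes f :: "'q::finite \<Rightarrow> real"
  shows "sum_list (map f x) = (\<Sum>a\<in>UNIV. real (count (mset x) a) * f a)"
proof (induction x)
  case (Cons c x)
  have "(\<Sum>a\<in>UNIV. real (count (mset (c # x)) a) * f a)
      = (\<Sum>a\<in>UNIV. real (count (mset x) a) * f a + (if a = c then f a else 0))"
    by (intro sum.cong) (auto simp: algebra_simps)
  then show ?case using Cons by (simp add: sum.distrib)
qed simp

text \<open>Each coordinate of the output type is a sum of \<open>n\<close> independent indicators, with variance
  at most \<open>n\<close>.\<close>
lemma expected_sq_dist_type_vec: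
  fixes U :: "real^'q::finite^'q"
  assumes st: "row_stochastic U" and len: "length x = n"
  shows "(\<Sum>y\<in>words n. perm_channel U n x y * (norm (type_vec y - mean_type U x))\<^sup>2)
      \<le> real CARD('q) * real n"
proof -
  let ?rs = "map (\<lambda>a. vec_nth (U $ a)) x"
  have rs: "\<forall>r\<in>set ?rs. prob_vector r" using prob_vector_row[OF st] by auto
  have mean: "mean_type U x $ b = sum_list (map (\<lambda>r. r b) ?rs)" for b
    unfolding mean_type_def by (simp add: sum_component comp_def sum_list_map_eq_sum_count_mset)
  have norm: "(norm (type_vec y - mean_type U x))\<^sup>2
      = (\<Sum>b\<in>UNIV. (real (count (mset y) b) - sum_list (map (\<lambda>r. r b) ?rs))\<^sup>2)" for y
    unfolding power2_norm_eq_inner inner_vec_def by (simp add: type_vec_def mean power2_eq_square)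
  have coord: "(\<Sum>y\<in>words n. perm_channel U n x y * (real (count (mset y) b) - sum_list (map (\<lambda>r. r b) ?rs))\<^sup>2)
      \<le> real n" for b
  proof -
    let ?G = "\<lambda>y. (real (count (mset y) b) - sum_list (map (\<lambda>r. r b) ?rs))\<^sup>2"
    have "(\<Sum>y\<in>words n. perm_channel U n x y * ?G y) = (\<Sum>y\<in>words n. ?G y * perm_output ?rs y)"
      by (intro sum.cong refl) (simp add: perm_channel_eq_perm_output[OF len] mult.commute)
    also have "\<dots> = (\<Sum>y\<in>words n. ?G y * (\<Prod>j<n. (?rs ! j) (y ! j)))"
      by (rule sum_words_perm_output_symmetric) (auto simp: words_def len)
    also have "\<dots> = prod_expect ?rs ?G" unfolding prod_expect_def using len by (simp add: mult.commute)
    also have "\<dots> \<le> real n" using prod_expect_count_variance[OF rs] len by simp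
    finally show ?thesis .
  qed
  have "(\<Sum>y\<in>words n. perm_channel U n x y * (norm (type_vec y - mean_type U x))\<^sup>2)
      = (\<Sum>b\<in>UNIV. \<Sum>y\<in>words n. perm_channel U n x y * (real (count (mset y) b) - sum_list (map (\<lambda>r. r b) ?rs))\<^sup>2)"
    unfolding norm sum_distrib_left by (rule sum.swap)
  also have "\<dots> \<le> (\<Sum>b\<in>(UNIV::'q set). real n)" by (intro sum_mono coord)
  finally show ?thesis by simp
qed

lemma prob_far_from_mean_type:
  fixes U :: "real^'q::finite^'q"
  assumes st: "row_stochastic U" and len: "length x = n" and \<tau>: "\<tau> > 0"
    and S: "S \<subseteq> {y\<in>words n. \<tau> \<le> norm (type_vec y - mean_type U x)}"
  shows "(\<Sum>y\<in>S. perm_channel U n x y) \<le> real CARD('q) * real n / \<tau>\<^sup>2"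
proof -
  let ?P = "perm_channel U n x" and ?D = "\<lambda>y. (norm (type_vec y - mean_type U x))\<^sup>2"
  have nn: "0 \<le> ?P y" for y by (rule perm_channel_nonneg[OF st len])
  have "(\<Sum>y\<in>S. ?P y) \<le> (\<Sum>y\<in>S. ?P y * (?D y / \<tau>\<^sup>2))"
  proof (rule sum_mono)
    fix y assume "y \<in> S"
    then have "\<tau>\<^sup>2 \<le> ?D y" using S \<tau> by (intro power_mono) auto
    then have "1 \<le> ?D y / \<tau>\<^sup>2" using \<tau> by simp
    from mult_left_mono[OF this nn[of y]] show "?P y \<le> ?P y * (?D y / \<tau>\<^sup>2)" by simp
  qed
  also have "\<dots> \<le> (\<Sum>y\<in>words n. ?P y * (?D y / \<tau>\<^sup>2))"
    using S nn by (intro sum_mono2) auto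
  also have "\<dots> = (\<Sum>y\<in>words n. ?P y * ?D y) / \<tau>\<^sup>2"
    by (simp add: sum_divide_distrib)
  also have "\<dots> \<le> real CARD('q) * real n / \<tau>\<^sup>2"
    using expected_sq_dist_type_vec[OF st len] \<tau> by (intro divide_right_mono) auto
  finally show ?thesis .
qed

lemma independent_rows_dual_map:
  fixes U :: "real^'q::finite^'q"
  obtains I and g :: "real^'q \<Rightarrow> real^'q"
  where "card I = rank U" "linear g" "\<And>a. a \<in> I \<Longrightarrow> g (U $ a) = axis a 1"
proof -
  obtain B where B: "B \<subseteq> rows U" "independent B" "rows U \<subseteq> span B" "card B = dim (rows U)"
    using basis_exists by blast
  have rows: "rows U = range (\<lambda>i. U $ i)"
    unfolding rows_def row_def by (auto simp: vec_lambda_eta)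
  define idx where "idx v = (SOME i. U $ i = v)" for v
  have idx: "U $ idx v = v" if "v \<in> B" for v
  proof -
    have "\<exists>i. U $ i = v" using that B(1) rows by auto
    then show ?thesis unfolding idx_def by (rule someI_ex)
  qed
  then have "inj_on idx B" by (metis inj_onI)
  then have card: "card (idx ` B) = rank U" using B(4) by (simp add: card_image row_rank_def)
  define f where "f v = axis (idx v) (1::real)" for v
  obtain g where g: "linear g" "\<forall>v\<in>B. g v = f v"
    using linear_independent_extend[OF B(2)] by blast
  have "g (U $ a) = axis a 1" if "a \<in> idx ` B" for a
    using that g(2) idx unfolding f_def by auto
  with card g(1) show thesis by (rule that)
qed

lemma dual_map_mean_type:
  fixes U :: "real^'q::finite^'q"
  assumes g: "linear g" "\<And>a. a \<in> I \<Longrightarrow> g (U $ a) = axis a 1" and x: "set x \<subseteq> I"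
  shows "g (mean_type U x) = type_vec x"
proof -
  have "g (mean_type U x) = (\<Sum>a\<in>UNIV. real (count (mset x) a) *\<^sub>R g (U $ a))"
    unfolding mean_type_def by (simp add: linear_sum[OF g(1)] linear_scale[OF g(1)])
  also have "\<dots> = (\<Sum>a\<in>UNIV. real (count (mset x) a) *\<^sub>R axis a 1)"
    using g(2) x by (intro sum.cong refl) (cases "a \<in> set x", auto)
  also have "\<dots> = type_vec x"
    using basis_expansion[of "type_vec x"] by (simp add: type_vec_def scalar_mult_eq_scaleR)
  finally show ?thesis .
qed

text \<open>The missed-detection event of codeword \<open>i\<close> and the decoding set of every other codeword
  both lie where the output type is at distance at least \<open>s / (2 B)\<close> from the mean type of
  codeword \<open>i\<close>.\<close>
lemma ball_decoder_error_bounds: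
  fixes U :: "real^'q::finite^'q" and g :: "real^'q \<Rightarrow> 'b::real_normed_vector"
  assumes st: "row_stochastic U" and g: "linear g" and B: "B > 0" "\<And>v. norm (g v) \<le> B * norm v"
    and s: "s > 0" and len: "\<And>i. i < L \<Longrightarrow> length (enc i) = n"
    and sep: "\<And>i j. i < L \<Longrightarrow> j < L \<Longrightarrow> i \<noteq> j \<Longrightarrow>
                s \<le> norm (g (mean_type U (enc i)) - g (mean_type U (enc j)))"
    and dec: "dec = (\<lambda>i. {y \<in> words n. norm (g (type_vec y) - g (mean_type U (enc i))) < s / 2})"
  shows "lambda1 U n L enc dec \<le> 4 * B\<^sup>2 * real CARD('q) * real n / s\<^sup>2"
    and "lambda2 U n L enc dec \<le> 4 * B\<^sup>2 * real CARD('q) * real n / s\<^sup>2"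
proof -
  define \<beta> where "\<beta> = 4 * B\<^sup>2 * real CARD('q) * real n / s\<^sup>2"
  have far: "(\<Sum>y\<in>S. perm_channel U n (enc i) y) \<le> \<beta>"
    if i: "i < L" and S: "S \<subseteq> {y \<in> words n. s / 2 \<le> norm (g (type_vec y) - g (mean_type U (enc i)))}"
    for i S
  proof (rule order_trans[OF prob_far_from_mean_type[OF st len[OF i], of "s / (2 * B)"]])
    show "S \<subseteq> {y \<in> words n. s / (2 * B) \<le> norm (type_vec y - mean_type U (enc i))}"
    proof
      fix y assume "y \<in> S"
      then have y: "y \<in> words n" "s / 2 \<le> norm (g (type_vec y - mean_type U (enc i)))"
        using S by (auto simp: linear_diff[OF g])
      then have "s / 2 \<le> B * norm (type_vec y - mean_type U (enc i))" using B(2) order_trans by blast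
      then show "y \<in> {y \<in> words n. s / (2 * B) \<le> norm (type_vec y - mean_type U (enc i))}"
        using y B(1) by (simp add: field_simps)
    qed
  qed (use B s in \<open>simp_all add: \<beta>_def field_simps power2_eq_square\<close>)
  have "0 \<le> \<beta>" by (simp add: \<beta>_def)
  then show "lambda1 U n L enc dec \<le> \<beta>"
  proof (rule lambda1_le)
    fix i assume "i < L"
    then show "err_miss U n enc dec i \<le> \<beta>" unfolding err_miss_def by (intro far) (auto simp: dec not_less)
  qed
  have far_dec: "dec j \<subseteq> {y \<in> words n. s / 2 \<le> norm (g (type_vec y) - g (mean_type U (enc i)))}"
    if ij: "i < L" "j < L" "i \<noteq> j" for i j
  proof
    fix y assume "y \<in> dec j"
    then have y: "y \<in> words n" "norm (g (type_vec y) - g (mean_type U (enc j))) < s / 2"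
      by (auto simp: dec)
    have "s \<le> norm (g (mean_type U (enc i)) - g (mean_type U (enc j)))" using sep ij by simp
    also have "\<dots> \<le> norm (g (type_vec y) - g (mean_type U (enc j)))
        + norm (g (type_vec y) - g (mean_type U (enc i)))"
      using norm_triangle_ineq4[of "g (type_vec y) - g (mean_type U (enc j))"
          "g (type_vec y) - g (mean_type U (enc i))"] by simp
    finally show "y \<in> {y \<in> words n. s / 2 \<le> norm (g (type_vec y) - g (mean_type U (enc i)))}"
      using y by simp
  qed
  show "lambda2 U n L enc dec \<le> \<beta>"
  proof (rule lambda2_le[OF \<open>0 \<le> \<beta>\<close>])
    fix i j assume "i < L" "j < L" "i \<noteq> j"
    then show "err_false U n enc dec i j \<le> \<beta>" unfolding err_false_def by (intro far far_dec)
  qed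
qed

lemma exists_word_with_counts:
  assumes J: "finite J" "a0 \<notin> J" and f: "(\<Sum>a\<in>J. f a) \<le> n"
  obtains x where "length x = n" "set x \<subseteq> insert a0 J" "\<And>a. a \<in> J \<Longrightarrow> count (mset x) a = f a"
proof -
  obtain js where js: "set js = J" "distinct js" using finite_distinct_list[OF J(1)] by blast
  define x where "x = concat (map (\<lambda>a. replicate (f a) a) js) @ replicate (n - (\<Sum>a\<in>J. f a)) a0"
  have "length x = n"
    using js f by (simp add: x_def length_concat comp_def sum_list_distinct_conv_sum_set)
  moreover have "set x \<subseteq> insert a0 J" using js by (auto simp: x_def)
  moreover have "count (mset x) a = f a" if "a \<in> J" for a
    using js J that by (auto simp: x_def mset_concat count_sum comp_def sum_list_distinct_conv_sum_set)
  ultimately show thesis using that by blast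
qed

text \<open>The codewords have \<open>s t\<^sub>a\<close> copies of each \<open>a \<in> I - {a\<^sub>0}\<close>, for \<open>t\<close> ranging over
  \<open>{..<K} ^ (I - {a\<^sub>0})\<close>, and are padded with \<open>a\<^sub>0\<close>.\<close>
lemma exists_grid_words:
  fixes I :: "'q set"
  assumes I: "finite I" "a0 \<in> I" "card I = Suc d" and n: "s * (d * K) \<le> n"
  obtains enc where "\<And>i. i < K ^ d \<Longrightarrow> length (enc i) = n \<and> set (enc i) \<subseteq> I"
    "\<And>i j. i < K ^ d \<Longrightarrow> j < K ^ d \<Longrightarrow> i \<noteq> j \<Longrightarrow>
       \<exists>a. real s \<le> \<bar>real (count (mset (enc i)) a) - real (count (mset (enc j)) a)\<bar>"
proof -
  define J where "J = I - {a0}"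
  have J: "finite J" "card J = d" "a0 \<notin> J" "insert a0 J = I" using I by (auto simp: J_def)
  define T where "T = PiE J (\<lambda>_. {..<K})"
  have "finite T" "card T = K ^ d" unfolding T_def using J by (simp_all add: finite_PiE card_PiE)
  then obtain h where h: "bij_betw h {..<K ^ d} T"
    using ex_bij_betw_nat_finite[of T] by (metis atLeast0LessThan)
  define P where "P t x \<longleftrightarrow> length x = n \<and> set x \<subseteq> I \<and> (\<forall>a\<in>J. count (mset x) a = s * t a)" for t x
  have ex: "\<exists>x. P t x" if "t \<in> T" for t
  proof -
    have "(\<Sum>a\<in>J. s * t a) \<le> (\<Sum>a\<in>J. s * K)"
      using that by (intro sum_mono) (auto simp: T_def PiE_def Pi_def less_imp_le)
    then have "(\<Sum>a\<in>J. s * t a) \<le> n" using J(2) n by (simp add: mult.left_commute)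
    then show ?thesis using exists_word_with_counts[OF J(1,3)] J(4) unfolding P_def by metis
  qed
  have hT: "h i \<in> T" if "i < K ^ d" for i using h that by (auto simp: bij_betw_def)
  have word: "P (h i) (SOME x. P (h i) x)" if "i < K ^ d" for i
    using ex[OF hT[OF that]] by (rule someI_ex)
  show thesis
  proof
    fix i assume "i < K ^ d"
    then show "length (SOME x. P (h i) x) = n \<and> set (SOME x. P (h i) x) \<subseteq> I"
      using word unfolding P_def by blast
  next
    fix i j assume ij: "i < K ^ d" "j < K ^ d" "i \<noteq> j"
    then have "h i \<in> T" "h j \<in> T" "h i \<noteq> h j" using h hT by (auto simp: bij_betw_def inj_on_def)
    then obtain a where a: "a \<in> J" "h i a \<noteq> h j a" unfolding T_def by (metis PiE_ext)
    then have "real s * 1 \<le> real s * \<bar>real (h i a) - real (h j a)\<bar>"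
      by (intro mult_left_mono) auto
    also have "\<dots> = \<bar>real (count (mset (SOME x. P (h i) x)) a) - real (count (mset (SOME x. P (h j) x)) a)\<bar>"
      using a(1) word[OF ij(1)] word[OF ij(2)] unfolding P_def
      by (simp add: abs_mult flip: right_diff_distrib)
    finally show "\<exists>a. real s \<le> \<bar>real (count (mset (SOME x. P (h i) x)) a)
        - real (count (mset (SOME x. P (h j) x)) a)\<bar>"
      by auto
  qed
qed

lemma grid_codes:
  fixes U :: "real^'q::finite^'q"
  assumes st: "row_stochastic U" and r: "rank U = Suc d"
  obtains C where "\<And>n K. \<exists>enc dec. det_ID_code n (K ^ d) enc dec \<and> (0 < n div (d * K) \<longrightarrow>
        lambda1 U n (K ^ d) enc dec \<le> C * real n / (real (n div (d * K)))\<^sup>2 \<and>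
        lambda2 U n (K ^ d) enc dec \<le> C * real n / (real (n div (d * K)))\<^sup>2)"
proof -
  obtain I and g :: "real^'q \<Rightarrow> real^'q"
    where I: "card I = Suc d" and g: "linear g" "\<And>a. a \<in> I \<Longrightarrow> g (U $ a) = axis a 1"
    using independent_rows_dual_map[of U] r by metis
  then obtain a0 where a0: "a0 \<in> I" by fastforce
  obtain B where B: "B > 0" "\<And>v. norm (g v) \<le> B * norm v"
    using linear_bounded_pos[OF g(1)] by blast
  show thesis
  proof
    fix n K :: nat
    define s where "s = n div (d * K)"
    have "s * (d * K) \<le> n" unfolding s_def by (metis div_times_less_eq_dividend)
    then obtain enc where enc: "\<And>i. i < K ^ d \<Longrightarrow> length (enc i) = n \<and> set (enc i) \<subseteq> I"
      and sep: "\<And>i j. i < K ^ d \<Longrightarrow> j < K ^ d \<Longrightarrow> i \<noteq> j \<Longrightarrow>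
       \<exists>a. real s \<le> \<bar>real (count (mset (enc i)) a) - real (count (mset (enc j)) a)\<bar>"
      using exists_grid_words[of I a0 d s K n] I a0 by (metis card.infinite nat.distinct(1))
    define dec where "dec = (\<lambda>i. {y \<in> words n. norm (g (type_vec y) - g (mean_type U (enc i))) < real s / 2})"
    have code: "det_ID_code n (K ^ d) enc dec"
      unfolding det_ID_code_def dec_def using enc by (auto simp: words_def)
    have sep': "real s \<le> norm (g (mean_type U (enc i)) - g (mean_type U (enc j)))"
      if ij: "i < K ^ d" "j < K ^ d" "i \<noteq> j" for i j
    proof -
      obtain a where "real s \<le> \<bar>real (count (mset (enc i)) a) - real (count (mset (enc j)) a)\<bar>"
        using sep[OF ij] by blast
      also have "\<dots> = \<bar>(type_vec (enc i) - type_vec (enc j)) $ a\<bar>" by (simp add: type_vec_def)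
      also have "\<dots> \<le> norm (type_vec (enc i) - type_vec (enc j))" by (rule component_le_norm_cart)
      finally show ?thesis using ij enc by (simp add: dual_map_mean_type[OF g])
    qed
    have "lambda1 U n (K ^ d) enc dec \<le> 4 * B\<^sup>2 * real CARD('q) * real n / (real s)\<^sup>2 \<and>
        lambda2 U n (K ^ d) enc dec \<le> 4 * B\<^sup>2 * real CARD('q) * real n / (real s)\<^sup>2" if "0 < s"
      using ball_decoder_error_bounds[OF st g(1) B _ _ sep' dec_def] that enc by simp
    then show "\<exists>enc dec. det_ID_code n (K ^ d) enc dec \<and> (0 < n div (d * K) \<longrightarrow>
        lambda1 U n (K ^ d) enc dec \<le> 4 * B\<^sup>2 * real CARD('q) * real n / (real (n div (d * K)))\<^sup>2 \<and>
        lambda2 U n (K ^ d) enc dec \<le> 4 * B\<^sup>2 * real CARD('q) * real n / (real (n div (d * K)))\<^sup>2)"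
      unfolding s_def by (intro exI[of _ enc] exI[of _ dec] conjI impI code) simp_all
  qed
qed

lemma one_le_div_log2:
  assumes "n \<ge> 2"
  shows "1 \<le> real n / log 2 (real n)"
proof -
  have "real n < 2 ^ n" using less_exp[of n] by (metis of_nat_less_numeral_power_cancel_iff)
  then have "log 2 (real n) < real n" using assms by (intro log_of_power_less) auto
  then show ?thesis using assms by simp
qed

lemma half_quotient_le_div:
  assumes "0 < m" "real m \<le> a" "4 \<le> real n / a"
  shows "real n / (2 * a) \<le> real (n div m)"
proof -
  have "n < m + (n div m) * m" using assms(1) by (rule dividend_less_div_times)
  then have "real n < real m + real (n div m) * real m" by (metis of_nat_add of_nat_less_iff of_nat_mult)
  then have "real n / real m - 1 < real (n div m)" using assms(1) by (simp add: field_simps)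
  moreover have "real n / a \<le> real n / real m" using assms by (intro divide_left_mono) auto
  ultimately show ?thesis using assms(3) by (simp add: field_simps)
qed

lemma grid_spacing_asymptotics:
  fixes d :: nat
  assumes d: "d \<ge> 1"
  defines "K \<equiv> \<lambda>n::nat. nat \<lceil>sqrt (real n / log 2 (real n))\<rceil>"
  shows "\<forall>\<^sub>F n in sequentially. 0 < n div (d * K n)"
    and "(\<lambda>n. real n / (real (n div (d * K n)))\<^sup>2) \<longlonglongrightarrow> 0"
proof -
  define \<psi> where "\<psi> n = real n / (sqrt (real n / log 2 (real n)) + 1)" for n :: nat
  have "filterlim (\<lambda>x::real. x / (sqrt (x / log 2 x) + 1)) at_top at_top" by real_asymp
  then have "filterlim \<psi> at_top sequentially"
    unfolding \<psi>_def using filterlim_compose filterlim_real_sequentially by blast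
  then have "\<forall>\<^sub>F n in sequentially. 4 * real d \<le> \<psi> n \<and> 2 \<le> n"
    by (simp add: filterlim_at_top eventually_conj eventually_ge_at_top)
  then have ev: "\<forall>\<^sub>F n in sequentially. \<psi> n / (2 * real d) \<le> real (n div (d * K n)) \<and> 0 < \<psi> n"
  proof eventually_elim
    case (elim n)
    define x where "x = real n / log 2 (real n)"
    have x: "1 \<le> x" unfolding x_def using elim by (intro one_le_div_log2) auto
    then have "real (K n) = real_of_int \<lceil>sqrt x\<rceil>" unfolding K_def x_def by simp
    moreover have "1 \<le> sqrt x" using x by simp
    ultimately have "1 \<le> real (K n)" "real (K n) \<le> sqrt x + 1" by linarith+
    then have "0 < d * K n" "real (d * K n) \<le> real d * (sqrt x + 1)" using d by (simp_all add: mult_left_mono)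
    moreover have \<psi>: "\<psi> n = real n / (sqrt x + 1)" unfolding \<psi>_def x_def by simp
    moreover have "4 \<le> real n / (real d * (sqrt x + 1))"
    proof -
      have "4 * real d \<le> real n / (sqrt x + 1)" "0 < real d" using elim \<psi> d by simp_all
      then have "4 \<le> real n / (sqrt x + 1) / real d" by (simp only: pos_le_divide_eq)
      then show ?thesis by (simp add: divide_divide_eq_left mult.commute)
    qed
    ultimately have "real n / (2 * (real d * (sqrt x + 1))) \<le> real (n div (d * K n))"
      by (intro half_quotient_le_div)
    moreover have "0 < \<psi> n" using \<psi> elim x by (simp add: add_pos_nonneg)
    ultimately show ?case using \<psi> by (simp add: field_simps)
  qed
  then show "\<forall>\<^sub>F n in sequentially. 0 < n div (d * K n)"
  proof eventually_elim
    case (elim n)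
    moreover have "0 < \<psi> n / (2 * real d)" using elim d by simp
    ultimately have "0 < real (n div (d * K n))" by linarith
    then show ?case by simp
  qed
  have "((\<lambda>x::real. x / (x / (sqrt (x / log 2 x) + 1))\<^sup>2) \<longlongrightarrow> 0) at_top" by real_asymp
  then have "(\<lambda>n. 4 * (real d)\<^sup>2 * (real n / (\<psi> n)\<^sup>2)) \<longlonglongrightarrow> 4 * (real d)\<^sup>2 * 0"
    unfolding \<psi>_def by (intro tendsto_intros filterlim_compose[OF _ filterlim_real_sequentially])
  then have lim: "(\<lambda>n. 4 * (real d)\<^sup>2 * (real n / (\<psi> n)\<^sup>2)) \<longlonglongrightarrow> 0" by simp
  have nonneg: "\<forall>\<^sub>F n in sequentially. 0 \<le> real n / (real (n div (d * K n)))\<^sup>2" by simp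
  have le: "\<forall>\<^sub>F n in sequentially. real n / (real (n div (d * K n)))\<^sup>2 \<le> 4 * (real d)\<^sup>2 * (real n / (\<psi> n)\<^sup>2)"
    using ev
  proof eventually_elim
    case (elim n)
    have p: "0 < \<psi> n / (2 * real d)" using elim d by simp
    then have q: "0 < real (n div (d * K n))" using elim by linarith
    from p have le: "(\<psi> n / (2 * real d))\<^sup>2 \<le> (real (n div (d * K n)))\<^sup>2"
      using elim by (intro power_mono) auto
    have "0 < (real (n div (d * K n)))\<^sup>2 * (\<psi> n / (2 * real d))\<^sup>2"
      using p q by (intro mult_pos_pos zero_less_power)
    from divide_left_mono[OF le _ this]
    have "real n / (real (n div (d * K n)))\<^sup>2 \<le> real n / (\<psi> n / (2 * real d))\<^sup>2" by simp
    also have "\<dots> = 4 * (real d)\<^sup>2 * (real n / (\<psi> n)\<^sup>2)"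
      by (simp add: power_divide power_mult_distrib)
    finally show ?case .
  qed
  show "(\<lambda>n. real n / (real (n div (d * K n)))\<^sup>2) \<longlonglongrightarrow> 0"
    by (rule tendsto_sandwich[OF nonneg le tendsto_const lim])
qed

lemma single_codeword_errors:
  "lambda1 U n 1 enc (\<lambda>_. words n) = 0" "lambda2 U n 1 enc (\<lambda>_. words n) = 0"
  using lambda1_le[of 0 1 U n enc "\<lambda>_. words n"] lambda2_le[of 0 1 U n enc "\<lambda>_. words n"]
    lambda_nonneg[of U n 1 enc "\<lambda>_. words n"]
  by (auto simp: err_miss_def)

lemma div_log2_powr_le_1:
  assumes "e \<le> 0"
  shows "(real n / log 2 (real n)) powr e \<le> 1"
proof (cases "n \<ge> 2")
  case True
  have "(real n / log 2 (real n)) powr e \<le> (real n / log 2 (real n)) powr 0"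
    by (rule powr_mono[OF assms one_le_div_log2[OF True]])
  moreover have "log 2 (real n) > 0" using True by simp
  ultimately show ?thesis using True by simp
next
  case False
  then have "n = 0 \<or> n = 1" by auto
  then show ?thesis by auto
qed

lemma div_log2_powr_le_ceiling_sqrt_power:
  "(real n / log 2 (real n)) powr (real d / 2) \<le> real (nat \<lceil>sqrt (real n / log 2 (real n))\<rceil> ^ d)"
proof -
  define x where "x = real n / log 2 (real n)"
  have x: "0 \<le> x" unfolding x_def by (cases "n = 0") auto
  have "x powr (real d / 2) \<le> sqrt x ^ d"
  proof (cases "x = 0")
    case False
    then show ?thesis using x by (simp add: powr_half_sqrt[symmetric] powr_realpow[symmetric] powr_powr)
  qed simp
  also have "\<dots> \<le> real (nat \<lceil>sqrt x\<rceil>) ^ d" using x by (intro power_mono) (linarith, simp)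
  finally show ?thesis by (simp add: x_def)
qed

lemma achievability:
  fixes U :: "real^'q::finite^'q"
  assumes st: "row_stochastic U"
  shows "\<exists>c > 0. \<exists>(L :: nat \<Rightarrow> nat) (enc :: nat \<Rightarrow> nat \<Rightarrow> 'q list) dec.
        (\<forall>n. det_ID_code n (L n) (enc n) (dec n) \<and>
             real (L n) \<ge> (real n / (c * log 2 (real n))) powr ((real (rank U) - 1) / 2)) \<and>
        (\<lambda>n. lambda1 U n (L n) (enc n) (dec n)) \<longlonglongrightarrow> 0 \<and>
        (\<lambda>n. lambda2 U n (L n) (enc n) (dec n)) \<longlonglongrightarrow> 0"
proof (cases "rank U \<le> 1")
  case True
  define enc :: "nat \<Rightarrow> nat \<Rightarrow> 'q list" where "enc n i = replicate n undefined" for n i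
  show ?thesis
    using single_codeword_errors[of U] div_log2_powr_le_1[of "(real (rank U) - 1) / 2"] True
    by (intro exI[of _ "1::real"] conjI exI[of _ "\<lambda>_. 1"] exI[of _ enc] exI[of _ "\<lambda>n _. words n"])
      (simp_all add: det_ID_code_def enc_def words_def)
next
  case False
  define d where "d = rank U - 1"
  have d: "rank U = Suc d" "d \<ge> 1" using False by (simp_all add: d_def)
  obtain C where codes: "\<And>n K. \<exists>enc dec. det_ID_code n (K ^ d) enc dec \<and>
      (0 < n div (d * K) \<longrightarrow>
        lambda1 U n (K ^ d) enc dec \<le> C * real n / (real (n div (d * K)))\<^sup>2 \<and>
        lambda2 U n (K ^ d) enc dec \<le> C * real n / (real (n div (d * K)))\<^sup>2)"
    using grid_codes[OF st d(1)] by blast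
  define K where "K n = nat \<lceil>sqrt (real n / log 2 (real n))\<rceil>" for n :: nat
  define P where "P n enc dec \<longleftrightarrow> det_ID_code n (K n ^ d) enc dec \<and> (0 < n div (d * K n) \<longrightarrow>
        lambda1 U n (K n ^ d) enc dec \<le> C * (real n / (real (n div (d * K n)))\<^sup>2) \<and>
        lambda2 U n (K n ^ d) enc dec \<le> C * (real n / (real (n div (d * K n)))\<^sup>2))"
    for n and enc :: "nat \<Rightarrow> 'q list" and dec
  have "\<forall>n. \<exists>enc dec. P n enc dec" unfolding P_def using codes by simp
  then obtain enc dec where P: "\<And>n. P n (enc n) (dec n)" by metis
  have lim: "(\<lambda>n. C * (real n / (real (n div (d * K n)))\<^sup>2)) \<longlonglongrightarrow> 0"
    using tendsto_mult_right_zero[OF grid_spacing_asymptotics(2)[OF d(2)]] unfolding K_def .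
  have "\<forall>\<^sub>F n in sequentially. 0 < n div (d * K n)"
    using grid_spacing_asymptotics(1)[OF d(2)] unfolding K_def .
  then have "\<forall>\<^sub>F n in sequentially.
      lambda1 U n (K n ^ d) (enc n) (dec n) \<le> C * (real n / (real (n div (d * K n)))\<^sup>2)"
    "\<forall>\<^sub>F n in sequentially.
      lambda2 U n (K n ^ d) (enc n) (dec n) \<le> C * (real n / (real (n div (d * K n)))\<^sup>2)"
    by (eventually_elim, use P in \<open>simp add: P_def\<close>)+
  then have "(\<lambda>n. lambda1 U n (K n ^ d) (enc n) (dec n)) \<longlonglongrightarrow> 0 \<and>
      (\<lambda>n. lambda2 U n (K n ^ d) (enc n) (dec n)) \<longlonglongrightarrow> 0"
    by (simp add: tendsto_sandwich[OF _ _ tendsto_const lim] lambda_nonneg)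
  moreover have "(real n / (1 * log 2 (real n))) powr ((real (rank U) - 1) / 2) \<le> real (K n ^ d)" for n
    using div_log2_powr_le_ceiling_sqrt_power[of n d] d(1) by (simp add: K_def)
  ultimately show ?thesis
    using P unfolding P_def
    by (intro exI[of _ "1::real"] conjI exI[of _ "\<lambda>n. K n ^ d"] exI[of _ enc] exI[of _ dec] allI)
      simp_all
qed

theorem theorem3:
  fixes U :: "real^'q^'q"
  assumes q2: "CARD('q) \<ge> 2"
    and stoch: "row_stochastic U"
  shows
    "(\<exists>c > 0. \<exists>(L :: nat \<Rightarrow> nat) (enc :: nat \<Rightarrow> nat \<Rightarrow> 'q list) dec.
        (\<forall>n. det_ID_code n (L n) (enc n) (dec n) \<and>
             real (L n) \<ge> (real n / (c * log 2 (real n))) powr ((real (rank U) - 1) / 2)) \<and>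
        (\<lambda>n. lambda1 U n (L n) (enc n) (dec n)) \<longlonglongrightarrow> 0 \<and>
        (\<lambda>n. lambda2 U n (L n) (enc n) (dec n)) \<longlonglongrightarrow> 0)
   \<and> ((\<forall>x y. U $ x $ y > 0) \<longrightarrow>
      (\<exists>R'::real. \<forall>R > R'. \<forall>(ns :: nat \<Rightarrow> nat) (L :: nat \<Rightarrow> nat) (enc :: nat \<Rightarrow> nat \<Rightarrow> 'q list) dec.
         filterlim ns at_top sequentially \<longrightarrow>
         (\<forall>i. det_ID_code (ns i) (L i) (enc i) (dec i) \<and>
              real (L i) \<ge> R * real (ns i) powr ((real CARD('q) - 1) / 2)
                            * (log 2 (real (ns i))) ^ ((CARD('q) - 1) * (CARD('q) - 2) div 2)) \<longrightarrow>
         liminf (\<lambda>i. ereal (lambda1 U (ns i) (L i) (enc i) (dec i)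
                            + lambda2 U (ns i) (L i) (enc i) (dec i))) > 0))
   \<and> ((\<forall>x y. U $ x $ y > 0) \<longrightarrow>
      (\<forall>(ns :: nat \<Rightarrow> nat) (cs :: nat \<Rightarrow> real) (L :: nat \<Rightarrow> nat) (enc :: nat \<Rightarrow> nat \<Rightarrow> 'q list) dec.
         filterlim ns at_top sequentially \<longrightarrow> filterlim cs at_top sequentially \<longrightarrow>
         (\<forall>i. det_ID_code (ns i) (L i) (enc i) (dec i) \<and>
              real (L i) \<ge> cs i * real (ns i) powr ((real CARD('q) - 1) / 2)
                            * (log 2 (real (ns i))) ^ ((CARD('q) - 1) * (CARD('q) - 2) div 2)) \<longrightarrow>
         liminf (\<lambda>i. ereal (lambda1 U (ns i) (L i) (enc i) (dec i)
                            + lambda2 U (ns i) (L i) (enc i) (dec i))) \<ge> 1))"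
proof (intro conjI impI, goal_cases)
  case 1
  show ?case by (rule achievability[OF stoch])
next
  case pos: 2
  show ?case by (rule weak_converse[OF stoch pos q2])
next
  case pos: 3
  show ?case by (intro allI impI) (rule strong_converse[OF stoch pos q2])
qed

end
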